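(* Let $\mathbf{Z}=\{\mathbf{z}_i\}_{i=1}^n$ be a $G$-networked sample, $\mathbf{w}$ an optimal weighting of $G$ and $\mathsf{s}=\mathsf{s}(G)$. Let $\mathcal{G}$ be a set of functions on $\mathcal{Z}$ and $c>0$ such that for each $g\in\mathcal{G}$: $\mathbf{E}(g)\ge0$, $\mathbf{E}(g^2)\le c\,\mathbf{E}(g)$, and $|g-\mathbf{E}(g)|\le B$ almost everywhere. Then for every $\epsilon>0$ and $0<\alpha\le1$, $$\Pr\Big\{\sup_{g\in\mathcal{G}}\frac{\mathbf{E}(g)-\mathbf{E}_{\mathbf{Z}_{\mathsf{s}}}(g)}{\sqrt{\mathbf{E}(g)+\epsilon}}>4\alpha\sqrt{\epsilon}\Big\}\le\mathcal{N}(\mathcal{G},\alpha\epsilon)\exp\Big\{-\frac{\alpha^2\,\mathsf{s}\,\epsilon}{2c+\frac23B}\Big\},$$ where $\mathbf{E}_{\mathbf{Z}_{\mathsf{s}}}(g)=\frac1{\mathsf{s}}\sum_{i=1}^n w_i\,g(\mathbf{z}_i)$.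
   Context: Networked setting: $G$ is a $k$-partite hypergraph with hyperedges $e_1,\dots,e_n$; vertex set partitioned into $V^{(1)},\dots,V^{(k)}$, each hyperedge containing exactly one vertex $e^{(j)}$ of each $V^{(j)}$. $\mathcal{X}=\mathcal{X}^{(1)}\times\cdots\times\mathcal{X}^{(k)}$ (compact metric spaces), $\mathcal{Y}=\mathbb{R}$, $\mathcal{Z}=\mathcal{X}\times\mathcal{Y}$. Each vertex $v\in V^{(j)}$ gets a feature $\phi(v)$ drawn independently from $\rho_j$, independently of the hypergraph. Hyperedge $e_i$ yields $\mathbf{z}_i=(\mathbf{x}_i,y_i)$, $\mathbf{x}_i=(\phi(e_i^{(1)}),\dots,\phi(e_i^{(k)}))$, labels conditionally independent given the features with $y_i\sim\rho_{y|\mathbf{x}}(\cdot\mid\mathbf{x}_i)$; $\rho=\rho_{y|\mathbf{x}}\rho_{\mathbf{x}}$ with $\rho_{\mathbf{x}}=\prod_j\rho_j$, and $\mathbf{E}(g)=\int_{\mathcal{Z}}g\,d\rho$. A feasible weighting is $\mathbf{w}$ with $w_i\ge0$ and $\sum_{i:\,v\in e_i}w_i\le1$ for every vertex $v$; $\mathsf{s}(G)=\max\sum_i w_i$ over feasible weightings, attained by an optimal weighting. $\mathcal{N}(\mathcal{G},\tau)$ is the minimal number of balls of radius $\tau$ in the sup norm covering $\mathcal{G}$. *)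

theory Defs
  imports "HOL-Probability.Probability"
begin

text \<open>Part j (j<k) has vertex
  set V j; hyperedge i contains exactly the vertex E i j of part j.  Vertices are
  identified as pairs (j, v) with v \<in> V j, so distinct parts are automatically disjoint.\<close>

definition kpartite_hypergraph ::
  "nat \<Rightarrow> nat \<Rightarrow> (nat \<Rightarrow> 'v set) \<Rightarrow> (nat \<Rightarrow> nat \<Rightarrow> 'v) \<Rightarrow> bool" where
  "kpartite_hypergraph k n V E \<longleftrightarrow>
     0 < k \<and> (\<forall>j<k. finite (V j)) \<and> (\<forall>i<n. \<forall>j<k. E i j \<in> V j)"

definition feasible_weighting ::
  "nat \<Rightarrow> nat \<Rightarrow> (nat \<Rightarrow> 'v set) \<Rightarrow> (nat \<Rightarrow> nat \<Rightarrow> 'v) \<Rightarrow> (nat \<Rightarrow> real) \<Rightarrow> bool" where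
  "feasible_weighting k n V E w \<longleftrightarrow>
     (\<forall>i<n. 0 \<le> w i) \<and>
     (\<forall>j<k. \<forall>v\<in>V j. (\<Sum>i\<in>{i. i < n \<and> E i j = v}. w i) \<le> 1)"

definition frac_matching_number ::
  "nat \<Rightarrow> nat \<Rightarrow> (nat \<Rightarrow> 'v set) \<Rightarrow> (nat \<Rightarrow> nat \<Rightarrow> 'v) \<Rightarrow> real" where
  "frac_matching_number k n V E =
     Sup {(\<Sum>i<n. w i) | w. feasible_weighting k n V E w}"

definition optimal_weighting ::
  "nat \<Rightarrow> nat \<Rightarrow> (nat \<Rightarrow> 'v set) \<Rightarrow> (nat \<Rightarrow> nat \<Rightarrow> 'v) \<Rightarrow> (nat \<Rightarrow> real) \<Rightarrow> bool" where
  "optimal_weighting k n V E w \<longleftrightarrow>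
     feasible_weighting k n V E w \<and> (\<Sum>i<n. w i) = frac_matching_number k n V E"

definition Zspace :: "nat \<Rightarrow> ((nat \<Rightarrow> 'x::topological_space) \<times> real) measure" where
  "Zspace k = (PiM {..<k} (\<lambda>_. borel)) \<Otimes>\<^sub>M borel"

definition Zset :: "nat \<Rightarrow> (nat \<Rightarrow> 'x set) \<Rightarrow> ((nat \<Rightarrow> 'x) \<times> real) set" where
  "Zset k X = PiE {..<k} X \<times> UNIV"

text \<open>The joint distribution rho = rho_{y|x} rho_x with rho_x = prod_j rho_j.\<close>
definition joint_dist ::
  "nat \<Rightarrow> (nat \<Rightarrow> 'x::topological_space measure) \<Rightarrow> ((nat \<Rightarrow> 'x) \<Rightarrow> real measure)
     \<Rightarrow> ((nat \<Rightarrow> 'x) \<times> real) measure" where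
  "joint_dist k \<rho> K = PiM {..<k} \<rho> \<bind> (\<lambda>x. distr (K x) (Zspace k) (\<lambda>y. (x, y)))"

definition expect :: "((nat \<Rightarrow> 'x::topological_space) \<times> real) measure \<Rightarrow> ((nat \<Rightarrow> 'x) \<times> real \<Rightarrow> real) \<Rightarrow> real" where
  "expect M g = integral\<^sup>L M g"

definition edge_features ::
  "nat \<Rightarrow> (nat \<Rightarrow> nat \<Rightarrow> 'v) \<Rightarrow> (nat \<times> 'v \<Rightarrow> 'x) \<Rightarrow> nat \<Rightarrow> (nat \<Rightarrow> 'x)" where
  "edge_features k E \<phi> i = restrict (\<lambda>j. \<phi> (j, E i j)) {..<k}"

text \<open>Distribution of a G-networked sample Z = (z_0,...,z_(n-1)): independent vertex
  features phi(j,v) ~ rho_j, then conditionally independent labels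
  y_i ~ rho_{y|x}(. | x_i) given the features.\<close>
definition networked_sample_dist ::
  "nat \<Rightarrow> nat \<Rightarrow> (nat \<Rightarrow> 'v set) \<Rightarrow> (nat \<Rightarrow> nat \<Rightarrow> 'v) \<Rightarrow> (nat \<Rightarrow> 'x::topological_space measure)
     \<Rightarrow> ((nat \<Rightarrow> 'x) \<Rightarrow> real measure) \<Rightarrow> (nat \<Rightarrow> (nat \<Rightarrow> 'x) \<times> real) measure" where
  "networked_sample_dist k n V E \<rho> K =
     PiM (SIGMA j:{..<k}. V j) (\<lambda>p. \<rho> (fst p)) \<bind>
       (\<lambda>\<phi>. PiM {..<n} (\<lambda>i. distr (K (edge_features k E \<phi> i)) (Zspace k)
                                (\<lambda>y. (edge_features k E \<phi> i, y))))"

definition weighted_emp_mean ::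
  "nat \<Rightarrow> (nat \<Rightarrow> real) \<Rightarrow> real \<Rightarrow> ('z \<Rightarrow> real) \<Rightarrow> (nat \<Rightarrow> 'z) \<Rightarrow> real" where
  "weighted_emp_mean n w s g Z = (1 / s) * (\<Sum>i<n. w i * g (Z i))"

text \<open>Covering number N(G, tau): minimal number of closed sup-norm balls (over the set Zs)
  of radius tau, centred in G, covering G; infinity if no finite cover exists.\<close>
definition covering_number :: "'z set \<Rightarrow> ('z \<Rightarrow> real) set \<Rightarrow> real \<Rightarrow> ennreal" where
  "covering_number Zs \<G> \<tau> =
     Inf {ennreal (real (card C)) | C. finite C \<and> C \<subseteq> \<G> \<and>
            (\<forall>g\<in>\<G>. \<exists>h\<in>C. \<forall>z\<in>Zs. \<bar>g z - h z\<bar> \<le> \<tau>)}"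

end

theory Submission
  imports Defs
begin

text \<open>
  A networked sample is a function of independent vertex features, but hyperedges share vertices.
  An optimal weighting \<open>w\<close> is a fractional cover of the vertices, so Finner's generalisation of
  Hoelder's inequality bounds the moment generating function of the weighted sum
  \<open>\<Sum>i. w i * Y (z i)\<close> by that of \<open>s\<close> independent copies of \<open>Y\<close>; hence the weighted sum obeys
  Bernstein's tail bound with \<open>s\<close> in place of the sample size. This is applied to the clipped
  deviation \<open>\<mu> h - h\<close> at every centre \<open>h\<close> of a minimal \<open>\<alpha> \<epsilon>\<close>-cover of \<open>\<G>\<close>, using the
  variance bound \<open>\<mu> (h\<^sup>2) \<le> c \<mu> h\<close>. A relative deviation of \<open>4 \<alpha> \<surd>\<epsilon>\<close> for \<open>g\<close>
  forces one of \<open>\<alpha> \<surd>\<epsilon>\<close> for its centre, and a union bound over the cover concludes.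
\<close>

section \<open>Elementary inequalities\<close>

lemma prod_powr_le_weighted_sum:
  fixes y w :: "'i \<Rightarrow> real"
  assumes "finite I" "\<And>i. i \<in> I \<Longrightarrow> 0 < y i" "\<And>i. i \<in> I \<Longrightarrow> 0 \<le> w i"
    "(\<Sum>i\<in>I. w i) \<le> 1"
  shows "(\<Prod>i\<in>I. y i powr w i) \<le> (\<Sum>i\<in>I. w i * y i) + (1 - (\<Sum>i\<in>I. w i))"
proof -
  \<comment> \<open>Jensen for \<open>exp\<close>, the missing weight \<open>1 - (\<Sum>i\<in>I. w i)\<close> sitting at the point \<open>y = 1\<close>.\<close>
  define S where "S = insert None (Some ` I)"
  define a where "a = (\<lambda>q. case q of None \<Rightarrow> 1 - (\<Sum>i\<in>I. w i) | Some i \<Rightarrow> w i)"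
  define z where "z = (\<lambda>q. case q of None \<Rightarrow> 0 | Some i \<Rightarrow> ln (y i))"
  have sum_S: "(\<Sum>q\<in>S. g q) = g None + (\<Sum>i\<in>I. g (Some i))" for g :: "'i option \<Rightarrow> real"
    unfolding S_def using assms(1) by (simp add: sum.reindex image_iff)
  have "exp (\<Sum>q\<in>S. a q *\<^sub>R z q) \<le> (\<Sum>q\<in>S. a q * exp (z q))"
  proof (rule convex_on_sum[OF _ _ exp_convex])
    show "(\<Sum>q\<in>S. a q) = 1" by (simp add: sum_S a_def)
    show "0 \<le> a q" if "q \<in> S" for q using that assms(3,4) by (auto simp: S_def a_def)
  qed (use assms(1) in \<open>auto simp: S_def\<close>)
  also have "(\<Sum>q\<in>S. a q * exp (z q)) = (\<Sum>i\<in>I. w i * y i) + (1 - (\<Sum>i\<in>I. w i))"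
    using assms by (simp add: sum_S a_def z_def)
  also have "exp (\<Sum>q\<in>S. a q *\<^sub>R z q) = (\<Prod>i\<in>I. y i powr w i)"
    using assms by (auto simp: sum_S a_def z_def exp_sum powr_def intro!: prod.cong
        dest: less_imp_neq[OF assms(2)])
  finally show ?thesis .
qed

lemma exp_le_quadratic_of_nonpos:
  fixes u :: real
  assumes "u \<le> 0"
  shows "exp u \<le> 1 + u + u\<^sup>2 / 2"
proof -
  define g where "g t = 1 + t + t\<^sup>2 / 2 - exp t" for t :: real
  have "(g has_real_derivative (1 + t - exp t)) (at t)" for t
    unfolding g_def by (auto intro!: derivative_eq_intros simp: power2_eq_square)
  then have "g 0 \<le> g u"
    by (intro DERIV_nonpos_imp_nonincreasing[OF assms])
       (use exp_ge_add_one_self in \<open>fastforce simp: algebra_simps\<close>)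
  then show ?thesis by (simp add: g_def)
qed

lemma two_mult_three_power_le_fact: "(2 * 3 ^ n :: nat) \<le> fact (n + 2)"
proof (induction n)
  case (Suc n)
  have "fact (Suc n + 2) = (n + 3) * fact (n + 2 :: nat)" by (simp add: algebra_simps)
  with Suc show ?case by simp
qed simp

lemma exp_le_Bernstein:
  fixes u L :: real
  assumes "u \<le> L" "0 \<le> L" "L < 3"
  shows "exp u \<le> 1 + u + u\<^sup>2 / (2 * (1 - L / 3))"
proof (cases "u \<le> 0")
  case True
  have "u\<^sup>2 / 2 \<le> u\<^sup>2 / (2 * (1 - L / 3))"
    using assms by (intro divide_left_mono) (auto simp: field_simps)
  then show ?thesis using exp_le_quadratic_of_nonpos[OF True] by linarith
next
  case False
  then have u: "0 \<le> u" "u < 3" using assms by auto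
  \<comment> \<open>Compare the tail of the exponential series with a geometric series of ratio \<open>u / 3\<close>.\<close>
  have geom: "(\<lambda>n. u\<^sup>2 / 2 * (u / 3) ^ n) sums (u\<^sup>2 / 2 * (1 / (1 - u / 3)))"
    by (intro sums_mult geometric_sums) (use u in auto)
  have term_le: "inverse (fact (n + 2)) * u ^ (n + 2) \<le> u\<^sup>2 / 2 * (u / 3) ^ n" for n
  proof -
    have "(2 * 3 ^ n :: real) \<le> fact (n + 2)"
      using of_nat_le_iff[where 'a=real, THEN iffD2, OF two_mult_three_power_le_fact[of n]]
      by (simp only: of_nat_fact of_nat_mult of_nat_power of_nat_numeral)
    then have "u\<^sup>2 * u ^ n / fact (n + 2) \<le> u\<^sup>2 * u ^ n / (2 * 3 ^ n)"
      using u by (intro divide_left_mono) auto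
    moreover have "inverse (fact (n + 2)) * u ^ (n + 2) = u\<^sup>2 * u ^ n / fact (n + 2)"
      by (simp add: power_add divide_inverse algebra_simps power2_eq_square)
    moreover have "u\<^sup>2 * u ^ n / (2 * 3 ^ n) = u\<^sup>2 / 2 * (u / 3) ^ n"
      by (simp add: power_divide)
    ultimately show ?thesis by simp
  qed
  have "(\<Sum>n. inverse (fact (n + 2)) * u ^ (n + 2)) \<le> (\<Sum>n. u\<^sup>2 / 2 * (u / 3) ^ n)"
    by (intro suminf_le term_le summable_exp[THEN summable_ignore_initial_segment]
        sums_summable[OF geom])
  then have "exp u \<le> 1 + u + u\<^sup>2 / 2 * (1 / (1 - u / 3))"
    unfolding exp_first_two_terms sums_unique[OF geom, symmetric] by simp
  also have "u\<^sup>2 / 2 * (1 / (1 - u / 3)) \<le> u\<^sup>2 / (2 * (1 - L / 3))"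
    using u assms by (auto simp: field_simps intro!: mult_right_mono)
  finally show ?thesis by simp
qed

lemma mult_bounds_of_abs_le:
  fixes l y B :: real
  assumes "0 \<le> l" "\<bar>y\<bar> \<le> B"
  shows "- (l * B) \<le> l * y \<and> l * y \<le> l * B"
proof -
  have "\<bar>l * y\<bar> \<le> l * B" using mult_left_mono[OF assms(2,1)] assms(1) by (simp add: abs_mult)
  then show ?thesis by linarith
qed

lemma weighted_emp_mean_diff_le:
  assumes w: "\<And>i. i < n \<Longrightarrow> 0 \<le> w i" and s: "s = (\<Sum>i<n. w i)" "0 < s"
    and close: "\<And>i. i < n \<Longrightarrow> \<bar>g (Z i) - h (Z i)\<bar> \<le> \<tau>"
  shows "\<bar>weighted_emp_mean n w s g Z - weighted_emp_mean n w s h Z\<bar> \<le> \<tau>"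
proof -
  have "\<bar>\<Sum>i<n. w i * (g (Z i) - h (Z i))\<bar> \<le> (\<Sum>i<n. w i * \<tau>)"
    by (rule order.trans[OF sum_abs sum_mono]) (use w close in \<open>auto simp: abs_mult intro: mult_left_mono\<close>)
  also have "\<dots> = s * \<tau>" by (simp add: s sum_distrib_right)
  finally have sum_le: "\<bar>\<Sum>i<n. w i * (g (Z i) - h (Z i))\<bar> \<le> s * \<tau>" .
  have "weighted_emp_mean n w s g Z - weighted_emp_mean n w s h Z = (\<Sum>i<n. w i * (g (Z i) - h (Z i))) / s"
    by (simp add: weighted_emp_mean_def sum_subtractf right_diff_distrib diff_divide_distrib)
  then show ?thesis using sum_le s(2) by (simp add: divide_le_eq mult.commute)
qed

lemma relative_deviation_transfer:
  fixes \<alpha> \<epsilon> \<mu>g \<mu>h Eg Eh :: real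
  assumes \<alpha>: "0 < \<alpha>" "\<alpha> \<le> 1" and \<epsilon>: "0 < \<epsilon>" and \<mu>: "0 \<le> \<mu>g" "0 \<le> \<mu>h"
    and d\<mu>: "\<bar>\<mu>g - \<mu>h\<bar> \<le> \<alpha> * \<epsilon>" and dE: "\<bar>Eg - Eh\<bar> \<le> \<alpha> * \<epsilon>"
    and dev: "4 * \<alpha> * sqrt \<epsilon> * sqrt (\<mu>g + \<epsilon>) < \<mu>g - Eg"
  shows "\<alpha> * sqrt \<epsilon> * sqrt (\<mu>h + \<epsilon>) < \<mu>h - Eh"
proof -
  define q where "q = sqrt (\<mu>g + \<epsilon>)"
  define p where "p = sqrt (\<mu>h + \<epsilon>)"
  define r where "r = sqrt \<epsilon>"
  define X where "X = \<alpha> * r * q"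
  \<comment> \<open>\<open>\<mu>h + \<epsilon> \<le> 4 (\<mu>g + \<epsilon>)\<close> gives \<open>p \<le> 2 q\<close>, and both \<open>\<alpha> \<epsilon>\<close> errors are at most \<open>X\<close>.\<close>
  have r: "0 < r" "r * r = \<epsilon>" using \<epsilon> by (simp_all add: r_def)
  have q: "0 \<le> q" "q * q = \<mu>g + \<epsilon>" using \<mu> \<epsilon> by (simp_all add: q_def)
  have p: "0 \<le> p" "p * p = \<mu>h + \<epsilon>" using \<mu> \<epsilon> by (simp_all add: p_def)
  have r_le_q: "r \<le> q" unfolding r_def q_def using \<mu> by simp
  have "\<alpha> * \<epsilon> \<le> \<epsilon>" using \<alpha> \<epsilon> by (simp add: mult_left_le_one_le)
  moreover have "\<mu>h \<le> \<mu>g + \<alpha> * \<epsilon>" using d\<mu> by (simp add: abs_le_iff)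
  moreover have "(2 * q) * (2 * q) = 4 * (q * q)" by simp
  ultimately have "p * p \<le> (2 * q) * (2 * q)" using p q \<mu> \<epsilon> by linarith
  then have "p\<^sup>2 \<le> (2 * q)\<^sup>2" by (simp only: power2_eq_square)
  then have "p \<le> 2 * q" by (rule power2_le_imp_le) (use q(1) in simp)
  then have "\<alpha> * r * p \<le> \<alpha> * r * (2 * q)" using \<alpha> r by (intro mult_left_mono) auto
  then have X_p: "\<alpha> * r * p \<le> 2 * X" by (simp add: X_def)
  have "\<alpha> * r * r \<le> \<alpha> * r * q" using r_le_q \<alpha> r by (intro mult_left_mono) auto
  then have X_\<epsilon>: "\<alpha> * \<epsilon> \<le> X" using r by (simp add: mult.assoc X_def)
  have X_dev: "4 * X < \<mu>g - Eg" using dev by (simp add: X_def r_def q_def mult.assoc)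
  have "\<mu>g - Eg - 2 * (\<alpha> * \<epsilon>) \<le> \<mu>h - Eh" using d\<mu> dE by (simp add: abs_le_iff)
  then have "\<alpha> * r * p < \<mu>h - Eh" using X_p X_\<epsilon> X_dev by linarith
  then show ?thesis unfolding p_def r_def .
qed

lemma Bernstein_exponent_le:
  fixes t \<sigma> B s c m a :: real
  assumes t: "0 < t" "t \<le> m" "t * t = a * m" and c: "0 < c" and B: "0 \<le> B" and s: "0 \<le> s"
    and \<sigma>: "\<sigma> = c * m"
  shows "- (t / (\<sigma> + B * t / 3) * s * t)
      + s * ((t / (\<sigma> + B * t / 3))\<^sup>2 * \<sigma> / (2 * (1 - t / (\<sigma> + B * t / 3) * B / 3)))
    \<le> - (a * s) / (2 * c + 2 / 3 * B)"
proof -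
  define D where "D = \<sigma> + B * t / 3"
  have m: "0 < m" using t by linarith
  have \<sigma>_pos: "0 < \<sigma>" using \<sigma> c m by simp
  have D: "0 < D" using \<sigma>_pos B t by (simp add: D_def add_pos_nonneg)
  have one: "1 - t / D * B / 3 = \<sigma> / D" using D by (simp add: D_def field_simps)
  have lhs: "- (t / D * s * t) + s * ((t / D)\<^sup>2 * \<sigma> / (2 * (1 - t / D * B / 3)))
      = - (s * (t * t) / (2 * D))"
    unfolding one using D \<sigma>_pos by (simp add: field_simps power2_eq_square)
  have a: "a = t * t / m" using t(3) m by (simp add: field_simps)
  then have "0 \<le> a" using m by simp
  then have "a * B * t \<le> a * B * m" using t B by (intro mult_left_mono) auto
  then have "a * (2 * D) \<le> (t * t) * (2 * c + 2 / 3 * B)"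
    using t(3) by (simp add: D_def \<sigma> algebra_simps)
  then have "a \<le> t * t * (2 * c + 2 / 3 * B) / (2 * D)" using D by (simp add: pos_le_divide_eq)
  then have "a / (2 * c + 2 / 3 * B) \<le> t * t / (2 * D)"
    using c B by (simp add: pos_divide_le_eq)
  then have "s * (a / (2 * c + 2 / 3 * B)) \<le> s * (t * t / (2 * D))" by (rule mult_left_mono[OF _ s])
  then have "a * s / (2 * c + 2 / 3 * B) \<le> s * (t * t) / (2 * D)" by (simp add: ac_simps)
  then show ?thesis unfolding D_def[symmetric] lhs by simp
qed

section \<open>Integrals on probability spaces\<close>

lemma (in prob_space) integrable_between:
  fixes g :: "'a \<Rightarrow> real"
  assumes "g \<in> borel_measurable M" "\<And>x. x \<in> space M \<Longrightarrow> a \<le> g x \<and> g x \<le> b"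
  shows "integrable M g"
proof (rule integrable_const_bound[where B="max \<bar>a\<bar> \<bar>b\<bar>"])
  show "AE x in M. norm (g x) \<le> max \<bar>a\<bar> \<bar>b\<bar>"
    using assms(2) by (intro AE_I2) (force simp: abs_le_iff)
qed (use assms(1) in auto)

lemma (in prob_space) integral_between:
  fixes g :: "'a \<Rightarrow> real"
  assumes "g \<in> borel_measurable M" "\<And>x. x \<in> space M \<Longrightarrow> a \<le> g x \<and> g x \<le> b"
  shows "a \<le> (\<integral>x. g x \<partial>M) \<and> (\<integral>x. g x \<partial>M) \<le> b"
  using integral_ge_const[OF integrable_between[OF assms]]
    integral_le_const[OF integrable_between[OF assms]] assms(2)
  by (auto intro!: AE_I2)

lemma (in prob_space) integral_prod_powr_le:
  fixes f :: "'i \<Rightarrow> 'a \<Rightarrow> real"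
  assumes fin: "finite I"
    and meas: "\<And>i. i \<in> I \<Longrightarrow> f i \<in> borel_measurable M"
    and bnd: "\<And>i x. i \<in> I \<Longrightarrow> x \<in> space M \<Longrightarrow> a \<le> f i x \<and> f i x \<le> b" and a: "0 < a"
    and w: "\<And>i. i \<in> I \<Longrightarrow> 0 \<le> w i" "(\<Sum>i\<in>I. w i) \<le> 1"
  shows "(\<integral>x. (\<Prod>i\<in>I. f i x powr w i) \<partial>M) \<le> (\<Prod>i\<in>I. (\<integral>x. f i x \<partial>M) powr w i)"
proof -
  \<comment> \<open>Normalise each factor by its mean; the weighted AM-GM bound \<open>r\<close> of the product integrates to 1.\<close>
  define c where "c i = (\<integral>x. f i x \<partial>M)" for i
  define q where "q x = (\<Prod>i\<in>I. (f i x / c i) powr w i)" for x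
  define r where "r x = (\<Sum>i\<in>I. w i * (f i x / c i)) + (1 - (\<Sum>i\<in>I. w i))" for x
  have int: "integrable M (f i)" if "i \<in> I" for i
    using integrable_between[OF meas bnd] that by blast
  have c_pos: "0 < c i" if "i \<in> I" for i
    using integral_between[OF meas[OF that] bnd[OF that]] a by (simp add: c_def)
  have f_pos: "0 < f i x" if "i \<in> I" "x \<in> space M" for i x
    using bnd[OF that] a by linarith
  have factor: "(\<Prod>i\<in>I. f i x powr w i) = (\<Prod>i\<in>I. c i powr w i) * q x" if "x \<in> space M" for x
    unfolding q_def prod.distrib[symmetric]
  proof (rule prod.cong[OF refl])
    fix i assume "i \<in> I"
    with c_pos f_pos that have "0 < c i" "0 < f i x" by auto
    then show "f i x powr w i = c i powr w i * (f i x / c i) powr w i"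
      by (simp add: powr_divide)
  qed
  have q_le_r: "q x \<le> r x" if "x \<in> space M" for x
    unfolding q_def r_def
    by (rule prod_powr_le_weighted_sum[OF fin _ w]) (use c_pos f_pos that in auto)
  have int_r: "integrable M r"
    unfolding r_def using int by (intro integrable_sum Bochner_Integration.integrable_add) auto
  have int_q: "integrable M q"
  proof (rule Bochner_Integration.integrable_bound[OF int_r])
    show "q \<in> borel_measurable M" unfolding q_def using meas by measurable
    show "AE x in M. norm (q x) \<le> norm (r x)"
      using q_le_r by (intro AE_I2) (force simp: q_def prod_nonneg)
  qed
  have int_r_eq: "(\<integral>x. r x \<partial>M) = 1"
    unfolding r_def using int c_pos
    by (simp add: Bochner_Integration.integral_add integrable_sum prob_space less_imp_neq[symmetric]
        flip: c_def cong: sum.cong)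
  have "(\<integral>x. (\<Prod>i\<in>I. f i x powr w i) \<partial>M) = (\<Prod>i\<in>I. c i powr w i) * (\<integral>x. q x \<partial>M)"
    by (simp add: Bochner_Integration.integral_cong[OF refl factor])
  also have "\<dots> \<le> (\<Prod>i\<in>I. c i powr w i) * (\<integral>x. r x \<partial>M)"
    by (intro mult_left_mono integral_mono[OF int_q int_r q_le_r] prod_nonneg) auto
  finally show ?thesis by (simp add: int_r_eq c_def)
qed

lemma (in prob_space) integral_powr_le_powr_integral:
  fixes f :: "'a \<Rightarrow> real"
  assumes "f \<in> borel_measurable M" "\<And>x. x \<in> space M \<Longrightarrow> a \<le> f x \<and> f x \<le> b" "0 < a"
    and "0 \<le> p" "p \<le> 1"
  shows "(\<integral>x. f x powr p \<partial>M) \<le> (\<integral>x. f x \<partial>M) powr p"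
  using integral_prod_powr_le[of "{()}" "\<lambda>_. f" a b "\<lambda>_. p"] assms by simp

lemma (in prob_space) nn_integral_powr_le_powr_integral:
  fixes f :: "'a \<Rightarrow> real"
  assumes f: "f \<in> borel_measurable M" "\<And>x. x \<in> space M \<Longrightarrow> a \<le> f x \<and> f x \<le> b" "0 < a"
    and p: "0 \<le> p" "p \<le> 1"
  shows "(\<integral>\<^sup>+x. ennreal (f x powr p) \<partial>M) \<le> ennreal ((\<integral>x. f x \<partial>M) powr p)"
proof -
  have "integrable M (\<lambda>x. f x powr p)"
  proof (rule integrable_between)
    show "(\<lambda>x. f x powr p) \<in> borel_measurable M" using f(1) by measurable
    show "a powr p \<le> f x powr p \<and> f x powr p \<le> b powr p" if "x \<in> space M" for x
      using f(2)[OF that] f(3) p by (auto intro: powr_mono2)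
  qed
  then have "(\<integral>\<^sup>+x. ennreal (f x powr p) \<partial>M) = ennreal (\<integral>x. f x powr p \<partial>M)"
    by (rule nn_integral_eq_integral) auto
  also have "\<dots> \<le> ennreal ((\<integral>x. f x \<partial>M) powr p)"
    using integral_powr_le_powr_integral[OF f p] by (rule ennreal_leI)
  finally show ?thesis .
qed

lemma (in prob_space) integral_prod_powr_le_const_factors:
  fixes f :: "'i \<Rightarrow> 'a \<Rightarrow> real"
  assumes fin: "finite I" and J: "J \<subseteq> I"
    and meas: "\<And>i. i \<in> I \<Longrightarrow> f i \<in> borel_measurable M"
    and bnd: "\<And>i x. i \<in> I \<Longrightarrow> x \<in> space M \<Longrightarrow> a \<le> f i x \<and> f i x \<le> b" and a: "0 < a"
    and w: "\<And>i. i \<in> I \<Longrightarrow> 0 \<le> w i" "(\<Sum>i\<in>J. w i) \<le> 1"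
    and const: "\<And>i x y. i \<in> I - J \<Longrightarrow> x \<in> space M \<Longrightarrow> y \<in> space M \<Longrightarrow> f i x = f i y"
  shows "(\<integral>x. (\<Prod>i\<in>I. f i x powr w i) \<partial>M) \<le> (\<Prod>i\<in>I. (\<integral>x. f i x \<partial>M) powr w i)"
proof -
  obtain x0 where x0: "x0 \<in> space M" using not_empty by blast
  define C where "C = (\<Prod>i\<in>I - J. f i x0 powr w i)"
  have integral_const: "(\<integral>x. f i x \<partial>M) = f i x0" if "i \<in> I - J" for i
  proof -
    have "(\<integral>x. f i x \<partial>M) = (\<integral>x. f i x0 \<partial>M)"
      by (rule Bochner_Integration.integral_cong) (use const[OF that _ x0] in auto)
    then show ?thesis by (simp add: prob_space)
  qed
  have split: "(\<Prod>i\<in>I. f i x powr w i) = C * (\<Prod>i\<in>J. f i x powr w i)" if "x \<in> space M" for x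
    using prod.subset_diff[OF J fin, of "\<lambda>i. f i x powr w i"] const[OF _ that x0]
    by (simp add: C_def)
  have "(\<integral>x. (\<Prod>i\<in>I. f i x powr w i) \<partial>M) = C * (\<integral>x. (\<Prod>i\<in>J. f i x powr w i) \<partial>M)"
    by (simp add: Bochner_Integration.integral_cong[OF refl split])
  also have "\<dots> \<le> C * (\<Prod>i\<in>J. (\<integral>x. f i x \<partial>M) powr w i)"
    using J fin meas bnd w
    by (intro mult_left_mono integral_prod_powr_le[OF _ _ _ a])
       (auto simp: C_def prod_nonneg intro: finite_subset)
  also have "\<dots> = (\<Prod>i\<in>I. (\<integral>x. f i x \<partial>M) powr w i)"
    using prod.subset_diff[OF J fin, of "\<lambda>i. (\<integral>x. f i x \<partial>M) powr w i"] integral_const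
    by (simp add: C_def)
  finally show ?thesis .
qed

lemma (in prob_space) Bernstein_mgf_bound:
  fixes Y :: "'a \<Rightarrow> real"
  assumes Y: "Y \<in> borel_measurable M" "\<And>x. x \<in> space M \<Longrightarrow> \<bar>Y x\<bar> \<le> B"
    and mean: "(\<integral>x. Y x \<partial>M) = 0" and var: "(\<integral>x. (Y x)\<^sup>2 \<partial>M) \<le> V"
    and l: "0 \<le> l" "l * B < 3"
  shows "(\<integral>x. exp (l * Y x) \<partial>M) \<le> exp (l\<^sup>2 * V / (2 * (1 - l * B / 3)))"
proof -
  define D where "D = 2 * (1 - l * B / 3)"
  have "0 \<le> B" using Y(2)[OF some_in_eq[THEN iffD2, OF not_empty]] by linarith
  then have lB: "0 \<le> l * B" using l by simp
  have D: "0 < D" using l(2) by (simp add: D_def mult.commute)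
  have lY: "- (l * B) \<le> l * Y x \<and> l * Y x \<le> l * B" if "x \<in> space M" for x
    using mult_bounds_of_abs_le[OF l(1) Y(2)[OF that]] .
  have int_Y: "integrable M Y"
    using Y(1) by (rule integrable_between[of _ "- B" B]) (use Y(2) in \<open>force simp: abs_le_iff\<close>)
  have "0 \<le> (Y x)\<^sup>2 \<and> (Y x)\<^sup>2 \<le> B\<^sup>2" if "x \<in> space M" for x
    using power_mono[OF Y(2)[OF that] abs_ge_zero, of 2] by simp
  then have int_Y2: "integrable M (\<lambda>x. (Y x)\<^sup>2)"
    using Y(1) by (intro integrable_between[of _ 0 "B\<^sup>2"]) auto
  have int_exp: "integrable M (\<lambda>x. exp (l * Y x))"
    using Y(1) lY by (intro integrable_between[of _ "exp (- (l * B))" "exp (l * B)"]) auto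
  have int_quad: "integrable M (\<lambda>x. 1 + l * Y x + (l * Y x)\<^sup>2 / D)"
    using int_Y int_Y2 by (auto simp: power_mult_distrib)
  have "exp (l * Y x) \<le> 1 + l * Y x + (l * Y x)\<^sup>2 / D" if "x \<in> space M" for x
    unfolding D_def by (rule exp_le_Bernstein) (use lY[OF that] lB l(2) in auto)
  then have "(\<integral>x. exp (l * Y x) \<partial>M) \<le> (\<integral>x. 1 + l * Y x + (l * Y x)\<^sup>2 / D \<partial>M)"
    by (rule integral_mono[OF int_exp int_quad])
  also have "\<dots> = 1 + l * (\<integral>x. Y x \<partial>M) + l\<^sup>2 * (\<integral>x. (Y x)\<^sup>2 \<partial>M) / D"
    using int_Y int_Y2 by (simp add: power_mult_distrib prob_space)
  also have "\<dots> \<le> 1 + l\<^sup>2 * V / D"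
    using mean var D by (auto intro!: divide_right_mono mult_left_mono)
  also have "\<dots> \<le> exp (l\<^sup>2 * V / D)" using exp_ge_add_one_self by simp
  finally show ?thesis by (simp add: D_def)
qed

lemma (in prob_space) clipped_deviation_moments:
  fixes h :: "'a \<Rightarrow> real"
  assumes h: "h \<in> borel_measurable M" and bd: "AE x in M. \<bar>h x - expectation h\<bar> \<le> B"
  shows "(\<integral>x. max (- B) (min B (expectation h - h x)) \<partial>M) = 0"
    and "(\<integral>x. (max (- B) (min B (expectation h - h x)))\<^sup>2 \<partial>M) \<le> (\<integral>x. (h x)\<^sup>2 \<partial>M)"
proof -
  let ?\<mu> = "expectation h"
  have clip: "AE x in M. max (- B) (min B (?\<mu> - h x)) = ?\<mu> - h x"
    using bd by eventually_elim (auto simp: abs_le_iff)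
  have bounded: "AE x in M. \<bar>h x\<bar> \<le> \<bar>?\<mu>\<bar> + B" using bd by eventually_elim auto
  have int_h: "integrable M h"
    using bounded by (intro integrable_const_bound[where B="\<bar>?\<mu>\<bar> + B"] h) auto
  have int_h2: "integrable M (\<lambda>x. (h x)\<^sup>2)"
  proof (rule integrable_const_bound[where B="(\<bar>?\<mu>\<bar> + B)\<^sup>2"])
    show "AE x in M. norm ((h x)\<^sup>2) \<le> (\<bar>?\<mu>\<bar> + B)\<^sup>2"
      using bounded
    proof eventually_elim
      fix x assume "\<bar>h x\<bar> \<le> \<bar>?\<mu>\<bar> + B"
      then have "\<bar>h x\<bar>\<^sup>2 \<le> (\<bar>?\<mu>\<bar> + B)\<^sup>2" by (rule power_mono) simp
      then show "norm ((h x)\<^sup>2) \<le> (\<bar>?\<mu>\<bar> + B)\<^sup>2" by simp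
    qed
  qed (use h in measurable)
  have "(\<integral>x. max (- B) (min B (?\<mu> - h x)) \<partial>M) = (\<integral>x. ?\<mu> - h x \<partial>M)"
    using h clip by (intro integral_cong_AE) auto
  also have "\<dots> = 0" using int_h by (simp add: prob_space)
  finally show "(\<integral>x. max (- B) (min B (?\<mu> - h x)) \<partial>M) = 0" .
  have "(\<integral>x. (max (- B) (min B (?\<mu> - h x)))\<^sup>2 \<partial>M) = (\<integral>x. (h x)\<^sup>2 + (?\<mu>\<^sup>2 - 2 * ?\<mu> * h x) \<partial>M)"
  proof (rule integral_cong_AE)
    show "(\<lambda>x. (max (- B) (min B (?\<mu> - h x)))\<^sup>2) \<in> borel_measurable M"
      using h by measurable
    show "(\<lambda>x. (h x)\<^sup>2 + (?\<mu>\<^sup>2 - 2 * ?\<mu> * h x)) \<in> borel_measurable M"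
      using h by measurable
    show "AE x in M. (max (- B) (min B (?\<mu> - h x)))\<^sup>2 = (h x)\<^sup>2 + (?\<mu>\<^sup>2 - 2 * ?\<mu> * h x)"
      using clip
    proof eventually_elim
      fix x assume eq: "max (- B) (min B (?\<mu> - h x)) = ?\<mu> - h x"
      show "(max (- B) (min B (?\<mu> - h x)))\<^sup>2 = (h x)\<^sup>2 + (?\<mu>\<^sup>2 - 2 * ?\<mu> * h x)"
        unfolding eq by (simp add: power2_eq_square algebra_simps)
    qed
  qed
  also have "\<dots> = (\<integral>x. (h x)\<^sup>2 \<partial>M) + (?\<mu>\<^sup>2 - 2 * ?\<mu> * ?\<mu>)"
    using int_h int_h2
    by (simp add: Bochner_Integration.integral_add Bochner_Integration.integral_diff prob_space)
  also have "\<dots> \<le> (\<integral>x. (h x)\<^sup>2 \<partial>M)" by (simp add: power2_eq_square)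
  finally show "(\<integral>x. (max (- B) (min B (?\<mu> - h x)))\<^sup>2 \<partial>M) \<le> (\<integral>x. (h x)\<^sup>2 \<partial>M)" .
qed

section \<open>Product measures and Finner's inequality\<close>

lemma prod_powr_between:
  fixes f w :: "'i \<Rightarrow> real"
  assumes "\<And>i. i \<in> I \<Longrightarrow> a \<le> f i \<and> f i \<le> b" "0 < a" "\<And>i. i \<in> I \<Longrightarrow> 0 \<le> w i"
  shows "(\<Prod>i\<in>I. a powr w i) \<le> (\<Prod>i\<in>I. f i powr w i) \<and> (\<Prod>i\<in>I. f i powr w i) \<le> (\<Prod>i\<in>I. b powr w i)"
proof -
  have "0 \<le> a powr w i \<and> a powr w i \<le> f i powr w i" "0 \<le> f i powr w i \<and> f i powr w i \<le> b powr w i"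
    if "i \<in> I" for i
    using assms(1)[OF that] assms(2) assms(3)[OF that] by (auto intro: powr_mono2)
  then show ?thesis by (simp add: prod_mono)
qed

lemma prob_space_extension:
  assumes "\<And>i. i \<in> I \<Longrightarrow> prob_space (M i)"
  obtains M' where "\<And>i. prob_space (M' i)" "\<And>i. i \<in> I \<Longrightarrow> M' i = M i"
    "\<And>J. J \<subseteq> I \<Longrightarrow> PiM J M' = PiM J M"
proof
  \<comment> \<open>\<open>PiM I M\<close> ignores \<open>M\<close> outside \<open>I\<close>; padding with point masses makes \<open>product_prob_space\<close> available.\<close>
  let ?M' = "\<lambda>i. if i \<in> I then M i else count_space {undefined}"
  show "prob_space (?M' i)" for i using assms by (auto intro: prob_spaceI)
  show "PiM J ?M' = PiM J M" if "J \<subseteq> I" for J using that by (intro PiM_cong) auto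
qed simp

lemma nn_integral_PiM_prod:
  fixes f :: "'i \<Rightarrow> 'a \<Rightarrow> ennreal"
  assumes I: "finite I" and M: "\<And>i. i \<in> I \<Longrightarrow> prob_space (M i)"
    and f: "\<And>i. i \<in> I \<Longrightarrow> f i \<in> borel_measurable (M i)"
  shows "(\<integral>\<^sup>+x. (\<Prod>i\<in>I. f i (x i)) \<partial>PiM I M) = (\<Prod>i\<in>I. \<integral>\<^sup>+y. f i y \<partial>M i)"
proof -
  obtain M' where M': "\<And>i. prob_space (M' i)" and M'_eq: "\<And>i. i \<in> I \<Longrightarrow> M' i = M i"
    and "\<And>J. J \<subseteq> I \<Longrightarrow> PiM J M' = PiM J M"
    using prob_space_extension[of I M, OF M] by blast
  then have PiM_M': "PiM I M' = PiM I M" by blast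
  interpret product_prob_space M' I by (intro product_prob_spaceI M')
  have "(\<integral>\<^sup>+x. (\<Prod>i\<in>I. f i (x i)) \<partial>PiM I M') = (\<Prod>i\<in>I. \<integral>\<^sup>+y. f i y \<partial>M' i)"
    using I f M'_eq by (intro product_nn_integral_prod) auto
  then show ?thesis using M'_eq by (simp add: PiM_M')
qed

lemma measurable_PiM_prob_kernel:
  assumes I: "finite I" and L: "\<And>i. i \<in> I \<Longrightarrow> L i \<in> measurable N (prob_algebra (M i))"
  shows "(\<lambda>x. PiM I (\<lambda>i. L i x)) \<in> measurable N (prob_algebra (PiM I M))"
proof (rule measurable_prob_algebra_generated[OF sets_PiM Int_stable_prod_algebra
      prod_algebra_sets_into_space])
  fix x assume x: "x \<in> space N"
  have L_x: "prob_space (L i x)" "sets (L i x) = sets (M i)" if "i \<in> I" for i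
    using measurable_space[OF L[OF that] x] by (auto simp: space_prob_algebra)
  show "prob_space (PiM I (\<lambda>i. L i x))" using L_x by (intro prob_space_PiM) auto
  show "sets (PiM I (\<lambda>i. L i x)) = sets (PiM I M)" using L_x by (intro sets_PiM_cong) auto
next
  fix A assume "A \<in> prod_algebra I M"
  then obtain X where A: "A = (\<Pi>\<^sub>E i\<in>I. X i)" and X: "X \<in> (\<Pi> i\<in>I. sets (M i))"
    using I by (auto simp: prod_algebra_eq_finite)
  have eq: "emeasure (PiM I (\<lambda>i. L i x)) A = (\<Prod>i\<in>I. emeasure (L i x) (X i))"
    if x: "x \<in> space N" for x
  proof -
    have L_x: "prob_space (L i x)" "sets (L i x) = sets (M i)" if "i \<in> I" for i
      using measurable_space[OF L[OF that] x] by (auto simp: space_prob_algebra)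
    have "prod_emb I (\<lambda>i. L i x) I (\<Pi>\<^sub>E i\<in>I. X i) = (\<Pi>\<^sub>E i\<in>I. X i)"
    proof (rule prod_emb_PiE_same_index)
      fix i assume "i \<in> I"
      then have "X i \<in> sets (L i x)" using X L_x(2) by auto
      then show "X i \<subseteq> space (L i x)" by (rule sets.sets_into_space)
    qed
    moreover have "emeasure (PiM I (\<lambda>i. L i x)) (prod_emb I (\<lambda>i. L i x) I (\<Pi>\<^sub>E i\<in>I. X i))
        = (\<Prod>i\<in>I. emeasure (L i x) (X i))"
      using X L_x I by (intro emeasure_PiM_emb) auto
    ultimately show ?thesis by (simp add: A)
  qed
  have "(\<lambda>x. \<Prod>i\<in>I. emeasure (L i x) (X i)) \<in> borel_measurable N"
  proof (rule borel_measurable_prod_ennreal)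
    fix i assume i: "i \<in> I"
    show "(\<lambda>x. emeasure (L i x) (X i)) \<in> borel_measurable N"
      using measurable_comp[OF measurable_prob_algebraD[OF L[OF i]]
          measurable_emeasure_subprob_algebra, of "X i"] X i
      by (simp add: comp_def Pi_iff)
  qed
  then show "(\<lambda>x. emeasure (PiM I (\<lambda>i. L i x)) A) \<in> borel_measurable N"
    by (subst measurable_cong[OF eq])
qed

lemma integral_PiM_insert_coordinate:
  fixes f :: "('i \<Rightarrow> 'a) \<Rightarrow> real"
  assumes M: "\<And>i. prob_space (M i)" and T: "finite T" "u \<notin> T"
    and f: "f \<in> borel_measurable (PiM (insert u T) M)"
    and bnd: "\<And>x. x \<in> space (PiM (insert u T) M) \<Longrightarrow> a \<le> f x \<and> f x \<le> b"
  shows "(\<lambda>x. \<integral>y. f (x(u:=y)) \<partial>M u) \<in> borel_measurable (PiM T M)"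
    and "\<And>x. x \<in> space (PiM T M) \<Longrightarrow> a \<le> (\<integral>y. f (x(u:=y)) \<partial>M u) \<and> (\<integral>y. f (x(u:=y)) \<partial>M u) \<le> b"
    and "(\<integral>x. f x \<partial>PiM (insert u T) M) = (\<integral>x. (\<integral>y. f (x(u:=y)) \<partial>M u) \<partial>PiM T M)"
proof -
  interpret product_prob_space M T by (intro product_prob_spaceI M)
  have "(\<lambda>(x, y). x(u := y)) \<in> measurable (PiM T M \<Otimes>\<^sub>M M u) (PiM (insert u T) M)"
    using measurable_fun_upd[where J=T and I="insert u T" and i=u and M=M
        and N="PiM T M \<Otimes>\<^sub>M M u" and f=fst and h=snd] T
    by (simp add: case_prod_beta')
  from measurable_comp[OF this f]
  have "(\<lambda>(x, y). f (x(u := y))) \<in> borel_measurable (PiM T M \<Otimes>\<^sub>M M u)"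
    by (simp add: comp_def case_prod_beta')
  then show "(\<lambda>x. \<integral>y. f (x(u:=y)) \<partial>M u) \<in> borel_measurable (PiM T M)"
    by (rule M.borel_measurable_lebesgue_integral)
  show "a \<le> (\<integral>y. f (x(u:=y)) \<partial>M u) \<and> (\<integral>y. f (x(u:=y)) \<partial>M u) \<le> b"
    if x: "x \<in> space (PiM T M)" for x
  proof (rule M.integral_between)
    show "(\<lambda>y. f (x(u:=y))) \<in> borel_measurable (M u)"
      using measurable_comp[OF measurable_component_update[OF x T(2)] f] by (simp add: comp_def)
    show "a \<le> f (x(u:=y)) \<and> f (x(u:=y)) \<le> b" if "y \<in> space (M u)" for y
      using bnd measurable_space[OF measurable_component_update[OF x T(2)] that] by simp
  qed
  show "(\<integral>x. f x \<partial>PiM (insert u T) M) = (\<integral>x. (\<integral>y. f (x(u:=y)) \<partial>M u) \<partial>PiM T M)"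
  proof (rule product_integral_insert[OF T])
    show "integrable (PiM (insert u T) M) f"
      using prob_space_PiM[of "insert u T" M] M T f bnd by (auto intro: prob_space.integrable_between)
  qed
qed

lemma integral_section_prod_powr_le:
  fixes f :: "'e \<Rightarrow> ('v \<Rightarrow> 'a) \<Rightarrow> real" and e :: "'e \<Rightarrow> 'v set"
  assumes M: "\<And>v. prob_space (M v)" and x: "x \<in> space (PiM T M)" and u: "u \<notin> T" and I: "finite I"
    and meas: "\<And>i. i \<in> I \<Longrightarrow> f i \<in> borel_measurable (PiM (insert u T) M)"
    and bnd: "\<And>i x. i \<in> I \<Longrightarrow> x \<in> space (PiM (insert u T) M) \<Longrightarrow> a \<le> f i x \<and> f i x \<le> b"
    and a: "0 < a"
    and dep: "\<And>i x y. i \<in> I \<Longrightarrow> (\<And>v. v \<in> e i \<Longrightarrow> x v = y v) \<Longrightarrow> f i x = f i y"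
    and w: "\<And>i. i \<in> I \<Longrightarrow> 0 \<le> w i" and cover: "(\<Sum>i\<in>{i\<in>I. u \<in> e i}. w i) \<le> 1"
  shows "(\<integral>y. (\<Prod>i\<in>I. f i (x(u:=y)) powr w i) \<partial>M u) \<le> (\<Prod>i\<in>I. (\<integral>y. f i (x(u:=y)) \<partial>M u) powr w i)"
proof (rule prob_space.integral_prod_powr_le_const_factors[OF M I, where J="{i\<in>I. u \<in> e i}"])
  note upd = measurable_component_update[OF x u]
  show "(\<lambda>y. f i (x(u:=y))) \<in> borel_measurable (M u)" if "i \<in> I" for i
    using measurable_comp[OF upd meas[OF that]] by (simp add: comp_def)
  show "a \<le> f i (x(u:=y)) \<and> f i (x(u:=y)) \<le> b" if "i \<in> I" "y \<in> space (M u)" for i y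
    using bnd[OF that(1) measurable_space[OF upd that(2)]] .
  show "f i (x(u:=y)) = f i (x(u:=y'))" if "i \<in> I - {i\<in>I. u \<in> e i}" for i y y'
    using that by (intro dep) auto
qed (use a w cover in auto)

lemma Finner_inequality:
  fixes M :: "'v \<Rightarrow> 'a measure" and f :: "'e \<Rightarrow> ('v \<Rightarrow> 'a) \<Rightarrow> real" and e :: "'e \<Rightarrow> 'v set"
  assumes S: "finite S" and I: "finite I" and M: "\<And>v. v \<in> S \<Longrightarrow> prob_space (M v)"
    and meas: "\<And>i. i \<in> I \<Longrightarrow> f i \<in> borel_measurable (PiM S M)"
    and bnd: "\<And>i x. i \<in> I \<Longrightarrow> x \<in> space (PiM S M) \<Longrightarrow> a \<le> f i x \<and> f i x \<le> b" and a: "0 < a"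
    and dep: "\<And>i x y. i \<in> I \<Longrightarrow> (\<And>v. v \<in> e i \<Longrightarrow> x v = y v) \<Longrightarrow> f i x = f i y"
    and w: "\<And>i. i \<in> I \<Longrightarrow> 0 \<le> w i"
    and cover: "\<And>v. v \<in> S \<Longrightarrow> (\<Sum>i\<in>{i\<in>I. v \<in> e i}. w i) \<le> 1"
  shows "(\<integral>x. (\<Prod>i\<in>I. f i x powr w i) \<partial>PiM S M) \<le> (\<Prod>i\<in>I. (\<integral>x. f i x \<partial>PiM S M) powr w i)"
proof -
  \<comment> \<open>Integrate out one coordinate \<open>u\<close> at a time: only the factors with \<open>u \<in> e i\<close> vary,
    their weights sum to at most 1, and Hoelder applies to them.\<close>
  obtain M' where M': "\<And>v. prob_space (M' v)"
    and "\<And>v. v \<in> S \<Longrightarrow> M' v = M v" and "\<And>J. J \<subseteq> S \<Longrightarrow> PiM J M' = PiM J M"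
    using prob_space_extension[of S M, OF M] by blast
  then have PiM_M': "PiM S M' = PiM S M" by blast
  have "(\<integral>x. (\<Prod>i\<in>I. f i x powr w i) \<partial>PiM S M') \<le> (\<Prod>i\<in>I. (\<integral>x. f i x \<partial>PiM S M') powr w i)"
    using S meas[folded PiM_M'] bnd[folded PiM_M'] dep cover
  proof (induction S arbitrary: f e rule: finite_induct)
    case empty
    have "(\<integral>x. g x \<partial>PiM {} M') = g (\<lambda>_. undefined)" for g :: "('v \<Rightarrow> 'a) \<Rightarrow> real"
      by (simp add: PiM_empty lebesgue_integral_count_space_finite)
    then show ?case by simp
  next
    case (insert u T)
    let ?P = "PiM (insert u T) M'" and ?Q = "PiM T M'"
    note f_meas = insert.prems(1) and f_bnd = insert.prems(2)
    note coord = integral_PiM_insert_coordinate[OF M' insert.hyps]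
    define F where "F x = (\<Prod>i\<in>I. f i x powr w i)" for x
    define f' where "f' i x = (\<integral>y. f i (x(u:=y)) \<partial>M' u)" for i x
    have F_meas: "F \<in> borel_measurable ?P" unfolding F_def using f_meas by measurable
    have F_bnd: "(\<Prod>i\<in>I. a powr w i) \<le> F x \<and> F x \<le> (\<Prod>i\<in>I. b powr w i)" if "x \<in> space ?P" for x
      unfolding F_def by (rule prod_powr_between[OF _ a w]) (use f_bnd that in auto)
    have f'_meas: "f' i \<in> borel_measurable ?Q" if "i \<in> I" for i
      unfolding f'_def by (rule coord(1)[OF f_meas[OF that] f_bnd[OF that]])
    have f'_bnd: "a \<le> f' i x \<and> f' i x \<le> b" if "i \<in> I" "x \<in> space ?Q" for i x
      unfolding f'_def by (rule coord(2)[OF f_meas[OF that(1)] f_bnd[OF that(1)] that(2)])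
    have cover_u: "(\<Sum>i\<in>{i\<in>I. u \<in> e i}. w i) \<le> 1" using insert.prems(4)[of u] by simp
    have inner: "(\<integral>y. F (x(u:=y)) \<partial>M' u) \<le> (\<Prod>i\<in>I. f' i x powr w i)" if x: "x \<in> space ?Q" for x
      using integral_section_prod_powr_le[where M=M' and f=f and e=e,
          OF M' x insert.hyps(2) I f_meas f_bnd a insert.prems(3) w cover_u]
      by (simp add: F_def f'_def)
    have IH: "(\<integral>x. (\<Prod>i\<in>I. f' i x powr w i) \<partial>?Q) \<le> (\<Prod>i\<in>I. (\<integral>x. f' i x \<partial>?Q) powr w i)"
    proof (rule insert.IH[where e="\<lambda>i. e i - {u}"])
      show "f' i x = f' i x'" if "i \<in> I" "\<And>v. v \<in> e i - {u} \<Longrightarrow> x v = x' v" for i x x'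
        unfolding f'_def
      proof (rule Bochner_Integration.integral_cong[OF refl])
        show "f i (x(u:=y)) = f i (x'(u:=y))" for y using that by (intro insert.prems(3)) auto
      qed
      show "(\<Sum>i\<in>{i\<in>I. v \<in> e i - {u}}. w i) \<le> 1" if "v \<in> T" for v
      proof -
        have "{i\<in>I. v \<in> e i - {u}} = {i\<in>I. v \<in> e i}" using that insert.hyps(2) by auto
        then show ?thesis using insert.prems(4)[of v] that by simp
      qed
    qed (use f'_meas f'_bnd in auto)
    have Q: "prob_space ?Q" by (rule prob_space_PiM[OF M'])
    have "(\<integral>x. F x \<partial>?P) = (\<integral>x. (\<integral>y. F (x(u:=y)) \<partial>M' u) \<partial>?Q)"
      by (rule coord(3)[OF F_meas F_bnd])
    also have "\<dots> \<le> (\<integral>x. (\<Prod>i\<in>I. f' i x powr w i) \<partial>?Q)"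
    proof (rule integral_mono[OF _ _ inner])
      show "integrable ?Q (\<lambda>x. \<integral>y. F (x(u:=y)) \<partial>M' u)"
        using coord(1,2)[OF F_meas F_bnd] by (rule prob_space.integrable_between[OF Q])
      show "integrable ?Q (\<lambda>x. \<Prod>i\<in>I. f' i x powr w i)"
      proof (rule prob_space.integrable_between[OF Q])
        show "(\<lambda>x. \<Prod>i\<in>I. f' i x powr w i) \<in> borel_measurable ?Q" using f'_meas by measurable
        show "(\<Prod>i\<in>I. a powr w i) \<le> (\<Prod>i\<in>I. f' i x powr w i)
            \<and> (\<Prod>i\<in>I. f' i x powr w i) \<le> (\<Prod>i\<in>I. b powr w i)" if "x \<in> space ?Q" for x
          by (rule prod_powr_between[OF _ a w]) (use f'_bnd that in auto)
      qed
    qed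
    also have "\<dots> \<le> (\<Prod>i\<in>I. (\<integral>x. f' i x \<partial>?Q) powr w i)" by (rule IH)
    also have "\<dots> = (\<Prod>i\<in>I. (\<integral>x. f i x \<partial>?P) powr w i)"
    proof (rule prod.cong[OF refl])
      fix i assume i: "i \<in> I"
      show "(\<integral>x. f' i x \<partial>?Q) powr w i = (\<integral>x. f i x \<partial>?P) powr w i"
        unfolding f'_def by (subst coord(3)[OF f_meas[OF i] f_bnd[OF i]]) simp_all
    qed
    finally show ?case unfolding F_def .
  qed
  then show ?thesis by (simp only: PiM_M')
qed

section \<open>Covers of function classes\<close>

definition is_cover :: "'z set \<Rightarrow> ('z \<Rightarrow> real) set \<Rightarrow> real \<Rightarrow> ('z \<Rightarrow> real) set \<Rightarrow> bool" where
  "is_cover Zs \<G> \<tau> C \<longleftrightarrow> finite C \<and> C \<subseteq> \<G> \<and> (\<forall>g\<in>\<G>. \<exists>h\<in>C. \<forall>z\<in>Zs. \<bar>g z - h z\<bar> \<le> \<tau>)"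

lemma covering_number_is_cover:
  "covering_number Zs \<G> \<tau> = Inf {ennreal (real (card C)) | C. is_cover Zs \<G> \<tau> C}"
  unfolding covering_number_def is_cover_def ..

lemma one_le_covering_number:
  assumes "\<G> \<noteq> {}"
  shows "1 \<le> covering_number Zs \<G> \<tau>"
  unfolding covering_number_is_cover
proof (rule Inf_greatest, safe)
  fix C assume "is_cover Zs \<G> \<tau> C"
  then have "finite C" "C \<noteq> {}" using assms by (auto simp: is_cover_def)
  then show "1 \<le> ennreal (real (card C))" by (simp add: Suc_le_eq card_gt_0_iff)
qed

lemma obtain_minimal_cover:
  assumes "covering_number Zs \<G> \<tau> \<noteq> \<top>"
  obtains C where "is_cover Zs \<G> \<tau> C" "ennreal (real (card C)) \<le> covering_number Zs \<G> \<tau>"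
proof -
  let ?Q = "\<lambda>m. \<exists>C. is_cover Zs \<G> \<tau> C \<and> card C = m"
  have "{ennreal (real (card C)) | C. is_cover Zs \<G> \<tau> C} \<noteq> {}"
    using assms unfolding covering_number_is_cover by (metis Inf_empty top_ennreal_def)
  then obtain C0 where "is_cover Zs \<G> \<tau> C0" by blast
  then have "?Q (LEAST m. ?Q m)" by (intro LeastI[of ?Q "card C0"]) blast
  then obtain C where C: "is_cover Zs \<G> \<tau> C" and card_C: "card C = (LEAST m. ?Q m)" by blast
  have "ennreal (real (card C)) \<le> covering_number Zs \<G> \<tau>"
    unfolding covering_number_is_cover
  proof (rule Inf_greatest, safe)
    fix C' assume "is_cover Zs \<G> \<tau> C'"
    then have "card C \<le> card C'" unfolding card_C by (intro Least_le) blast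
    then show "ennreal (real (card C)) \<le> ennreal (real (card C'))" by (simp add: ennreal_leI)
  qed
  with C show ?thesis by (rule that)
qed

lemma Zset_sets:
  assumes "\<And>j. j < k \<Longrightarrow> X j \<in> sets borel"
  shows "Zset k X \<in> sets (Zspace k)"
  unfolding Zset_def Zspace_def
  by (rule pair_measureI[OF sets_PiM_I_finite]) (use assms in auto)

section \<open>Networked samples\<close>

locale networked_sample =
  fixes k n :: nat and V :: "nat \<Rightarrow> 'v set" and E :: "nat \<Rightarrow> nat \<Rightarrow> 'v"
    and \<rho> :: "nat \<Rightarrow> 'x::metric_space measure" and K :: "(nat \<Rightarrow> 'x) \<Rightarrow> real measure"
  assumes hypergraph: "kpartite_hypergraph k n V E"
    and prob_space_rho: "\<And>j. j < k \<Longrightarrow> prob_space (\<rho> j)"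
    and sets_rho: "\<And>j. j < k \<Longrightarrow> sets (\<rho> j) = sets borel"
    and K: "K \<in> measurable (PiM {..<k} (\<lambda>_. borel)) (prob_algebra borel)"
begin

text \<open>\<open>Phi\<close> is the law of the vertex features \<open>\<phi>\<close>, \<open>Rx\<close> is \<open>\<rho>\<^sub>x\<close>, \<open>example_dist x\<close> is
  \<open>\<rho>\<^sub>y\<^sub>|\<^sub>x(\<cdot> | x)\<close> lifted to examples \<open>(x, y)\<close>, \<open>P\<close> is the law of the sample and \<open>J\<close> is \<open>\<rho>\<close>.\<close>

abbreviation "vertices \<equiv> SIGMA j:{..<k}. V j"
abbreviation "Phi \<equiv> PiM vertices (\<lambda>p. \<rho> (fst p))"
abbreviation "Xb \<equiv> PiM {..<k} (\<lambda>_. borel :: 'x measure)"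
abbreviation "Rx \<equiv> PiM {..<k} \<rho>"
abbreviation "example_dist x \<equiv> distr (K x) (Zspace k) (\<lambda>y. (x, y))"
abbreviation "feat i \<phi> \<equiv> edge_features k E \<phi> i"
abbreviation "sample_kernel \<phi> \<equiv> PiM {..<n} (\<lambda>i. example_dist (feat i \<phi>))"
abbreviation "Zn \<equiv> PiM {..<n} (\<lambda>_. Zspace k :: ((nat \<Rightarrow> 'x) \<times> real) measure)"
abbreviation "P \<equiv> networked_sample_dist k n V E \<rho> K"
abbreviation "J \<equiv> joint_dist k \<rho> K"

lemma finite_vertices: "finite vertices"
  using hypergraph unfolding kpartite_hypergraph_def by auto

lemma edge_vertex: "i < n \<Longrightarrow> j < k \<Longrightarrow> (j, E i j) \<in> vertices"
  using hypergraph unfolding kpartite_hypergraph_def by auto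

lemma sets_Rx: "sets Rx = sets Xb"
  by (rule sets_PiM_cong) (auto simp: sets_rho)

lemma prob_space_Rx: "prob_space Rx"
  by (rule prob_space_PiM) (auto intro: prob_space_rho)

lemma prob_space_Phi: "prob_space Phi"
  by (rule prob_space_PiM) (auto intro: prob_space_rho)

lemma example_dist_measurable: "example_dist \<in> measurable Rx (prob_algebra (Zspace k))"
proof (subst measurable_cong_sets[OF sets_Rx refl], rule measurable_distr_prob_space2[OF K])
  show "(\<lambda>(x, y). (x, y)) \<in> Xb \<Otimes>\<^sub>M borel \<rightarrow>\<^sub>M Zspace k"
    unfolding Zspace_def by (simp add: case_prod_beta' measurable_ident_sets)
qed

lemma
  assumes "x \<in> space Rx"
  shows prob_space_example_dist: "prob_space (example_dist x)"
    and sets_example_dist: "sets (example_dist x) = sets (Zspace k)"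
  using measurable_space[OF example_dist_measurable assms] by (auto simp: space_prob_algebra)

lemma measurable_feat: "i < n \<Longrightarrow> feat i \<in> measurable Phi Rx"
  unfolding edge_features_def
proof (rule measurable_restrict)
  fix j assume "i < n" "j \<in> {..<k}"
  then show "(\<lambda>\<phi>. \<phi> (j, E i j)) \<in> measurable Phi (\<rho> j)"
    using measurable_component_singleton[OF edge_vertex, of i j "\<lambda>p. \<rho> (fst p)"] by simp
qed

lemma distr_feat:
  assumes "i < n"
  shows "distr Phi Rx (feat i) = Rx"
proof -
  have "distr Phi (\<Pi>\<^sub>M j\<in>{..<k}. \<rho> (fst (j, E i j))) (\<lambda>\<phi>. \<lambda>j\<in>{..<k}. \<phi> (j, E i j))
      = (\<Pi>\<^sub>M j\<in>{..<k}. \<rho> (fst (j, E i j)))"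
    by (rule distr_PiM_reindex) (use prob_space_rho edge_vertex assms in \<open>auto simp: inj_on_def\<close>)
  then show ?thesis by (simp add: edge_features_def)
qed

lemma sample_kernel_measurable: "sample_kernel \<in> measurable Phi (prob_algebra Zn)"
  using measurable_comp[OF measurable_feat example_dist_measurable]
  by (intro measurable_PiM_prob_kernel) (auto simp: comp_def)

lemma P_eq: "P = Phi \<bind> sample_kernel"
  unfolding networked_sample_dist_def ..

lemma J_eq: "J = Rx \<bind> example_dist"
  unfolding joint_dist_def ..

lemma prob_space_P: "prob_space P"
  unfolding P_eq using prob_space_Phi sample_kernel_measurable
  by (intro prob_space_bind') (auto simp: space_prob_algebra)

lemma sets_P: "sets P = sets Zn"
  unfolding P_eq using prob_space_Phi sample_kernel_measurable
  by (intro sets_bind') (auto simp: space_prob_algebra)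

lemma space_P: "space P = space Zn"
  using sets_P by (rule sets_eq_imp_space_eq)

lemma prob_space_J: "prob_space J"
  unfolding J_eq using prob_space_Rx example_dist_measurable
  by (intro prob_space_bind') (auto simp: space_prob_algebra)

lemma sets_J: "sets J = sets (Zspace k)"
  unfolding J_eq using prob_space_Rx example_dist_measurable
  by (intro sets_bind') (auto simp: space_prob_algebra)

lemma space_J: "space J = space (Zspace k)"
  using sets_J by (rule sets_eq_imp_space_eq)

lemma feat_space: "i < n \<Longrightarrow> \<phi> \<in> space Phi \<Longrightarrow> feat i \<phi> \<in> space Rx"
  using measurable_space[OF measurable_feat] by blast

lemma feasible_weighting_between:
  assumes w: "feasible_weighting k n V E w" and i: "i < n"
  shows "0 \<le> w i" "w i \<le> 1"
proof -
  show "0 \<le> w i" using w i by (auto simp: feasible_weighting_def)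
  have k: "0 < k" and v: "E i 0 \<in> V 0" using hypergraph i by (auto simp: kpartite_hypergraph_def)
  have "w i \<le> (\<Sum>i'\<in>{i'. i' < n \<and> E i' 0 = E i 0}. w i')"
    by (rule member_le_sum) (use i w in \<open>auto simp: feasible_weighting_def\<close>)
  also have "\<dots> \<le> 1" using w k v by (auto simp: feasible_weighting_def)
  finally show "w i \<le> 1" .
qed

lemma nn_integral_sample_prod:
  assumes F: "\<And>i. i < n \<Longrightarrow> F i \<in> borel_measurable (Zspace k)"
  shows "(\<integral>\<^sup>+Z. (\<Prod>i<n. F i (Z i)) \<partial>P)
    = (\<integral>\<^sup>+\<phi>. (\<Prod>i<n. \<integral>\<^sup>+z. F i z \<partial>example_dist (feat i \<phi>)) \<partial>Phi)"
proof -
  have "(\<lambda>Z. \<Prod>i<n. F i (Z i)) \<in> borel_measurable Zn"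
  proof (rule borel_measurable_prod_ennreal)
    fix i assume "i \<in> {..<n}"
    then show "(\<lambda>Z. F i (Z i)) \<in> borel_measurable Zn"
      using measurable_comp[OF measurable_component_singleton[of i "{..<n}"] F[of i]]
      by (auto simp: comp_def)
  qed
  then have "(\<integral>\<^sup>+Z. (\<Prod>i<n. F i (Z i)) \<partial>P) = (\<integral>\<^sup>+\<phi>. \<integral>\<^sup>+Z. (\<Prod>i<n. F i (Z i)) \<partial>sample_kernel \<phi> \<partial>Phi)"
    unfolding P_eq by (rule nn_integral_bind[OF _ measurable_prob_algebraD[OF sample_kernel_measurable]])
  also have "\<dots> = (\<integral>\<^sup>+\<phi>. (\<Prod>i<n. \<integral>\<^sup>+z. F i z \<partial>example_dist (feat i \<phi>)) \<partial>Phi)"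
  proof (intro nn_integral_cong nn_integral_PiM_prod)
    fix \<phi> i assume "\<phi> \<in> space Phi" "i \<in> {..<n}"
    then have "feat i \<phi> \<in> space Rx" by (auto intro: feat_space)
    then show "prob_space (example_dist (feat i \<phi>))"
      and "F i \<in> borel_measurable (example_dist (feat i \<phi>))"
      using F \<open>i \<in> {..<n}\<close> by (auto simp: prob_space_example_dist measurable_cong_sets[OF sets_example_dist refl])
  qed auto
  finally show ?thesis .
qed

lemma integral_J:
  fixes F :: "(nat \<Rightarrow> 'x) \<times> real \<Rightarrow> real"
  assumes F: "F \<in> borel_measurable (Zspace k)" "\<And>z. a \<le> F z \<and> F z \<le> b"
  shows "(\<integral>z. F z \<partial>J) = (\<integral>x. (\<integral>z. F z \<partial>example_dist x) \<partial>Rx)"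
  unfolding J_eq
proof (rule integral_bind[OF F(1) _ measurable_prob_algebraD[OF example_dist_measurable]])
  show "\<bar>F z\<bar> \<le> max \<bar>a\<bar> \<bar>b\<bar>" for z using F(2)[of z] by auto
  show "finite_measure Rx" using prob_space_Rx by (simp add: prob_space_def)
  show "AE x in Rx. emeasure (example_dist x) (space (example_dist x)) \<le> ennreal 1"
    using prob_space.emeasure_space_1[OF prob_space_example_dist] by (intro AE_I2) simp
qed

lemma integral_feat_prod_powr_le:
  assumes G: "G \<in> borel_measurable Rx" "\<And>x. x \<in> space Rx \<Longrightarrow> a \<le> G x \<and> G x \<le> b" "0 < a"
    and w: "feasible_weighting k n V E w"
  shows "(\<integral>\<phi>. (\<Prod>i<n. G (feat i \<phi>) powr w i) \<partial>Phi) \<le> (\<integral>x. G x \<partial>Rx) powr (\<Sum>i<n. w i)"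
proof -
  have "(\<integral>\<phi>. (\<Prod>i<n. G (feat i \<phi>) powr w i) \<partial>Phi) \<le> (\<Prod>i<n. (\<integral>\<phi>. G (feat i \<phi>) \<partial>Phi) powr w i)"
  proof (rule Finner_inequality[OF finite_vertices _ _ _ _ G(3), where e="\<lambda>i. (\<lambda>j. (j, E i j)) ` {..<k}"])
    show "(\<lambda>\<phi>. G (feat i \<phi>)) \<in> borel_measurable Phi" if "i \<in> {..<n}" for i
      using measurable_comp[OF measurable_feat G(1), of i] that by (simp add: comp_def)
    show "a \<le> G (feat i \<phi>) \<and> G (feat i \<phi>) \<le> b" if "i \<in> {..<n}" "\<phi> \<in> space Phi" for i \<phi>
      using G(2) feat_space that by auto
    show "G (feat i \<phi>) = G (feat i \<psi>)"
      if "\<And>v. v \<in> (\<lambda>j. (j, E i j)) ` {..<k} \<Longrightarrow> \<phi> v = \<psi> v" for i \<phi> \<psi>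
    proof -
      have "feat i \<phi> = feat i \<psi>" unfolding edge_features_def using that by (intro restrict_ext) auto
      then show ?thesis by simp
    qed
    show "(\<Sum>i\<in>{i\<in>{..<n}. v \<in> (\<lambda>j. (j, E i j)) ` {..<k}}. w i) \<le> 1" if "v \<in> vertices" for v
    proof -
      obtain j u where v: "v = (j, u)" "j < k" "u \<in> V j" using \<open>v \<in> vertices\<close> by auto
      then have "{i\<in>{..<n}. v \<in> (\<lambda>j. (j, E i j)) ` {..<k}} = {i. i < n \<and> E i j = u}" by auto
      then show ?thesis using w v by (auto simp: feasible_weighting_def)
    qed
    show "prob_space (\<rho> (fst v))" if "v \<in> vertices" for v using that prob_space_rho by auto
    show "0 \<le> w i" if "i \<in> {..<n}" for i using feasible_weighting_between(1)[OF w] that by auto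
  qed simp
  also have "\<dots> = (\<Prod>i<n. (\<integral>x. G x \<partial>Rx) powr w i)"
  proof (rule prod.cong[OF refl])
    fix i assume "i \<in> {..<n}"
    then have "(\<integral>\<phi>. G (feat i \<phi>) \<partial>Phi) = (\<integral>x. G x \<partial>Rx)"
      using integral_distr[OF measurable_feat G(1)] distr_feat by simp
    then show "(\<integral>\<phi>. G (feat i \<phi>) \<partial>Phi) powr w i = (\<integral>x. G x \<partial>Rx) powr w i" by simp
  qed
  also have "\<dots> = (\<integral>x. G x \<partial>Rx) powr (\<Sum>i<n. w i)"
    using prob_space.integral_between[OF prob_space_Rx G(1,2)] G(3) by (simp add: powr_sum)
  finally show ?thesis .
qed

lemma emeasure_sample_coordinate:
  assumes D: "D \<in> sets (Zspace k)" and i: "i < n"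
  shows "{Z \<in> space P. Z i \<in> D} \<in> sets P" "emeasure P {Z \<in> space P. Z i \<in> D} = emeasure J D"
proof -
  have "{Z \<in> space P. Z i \<in> D} = (\<lambda>Z. Z i) -` D \<inter> space Zn" unfolding space_P by auto
  also have "\<dots> \<in> sets Zn"
    using measurable_sets[OF measurable_component_singleton[of i "{..<n}"] D] i by auto
  finally show A_sets: "{Z \<in> space P. Z i \<in> D} \<in> sets P" using sets_P by simp
  define F where "F j z = (if j = i then indicator D z else 1 :: ennreal)" for j z
  have F: "F j \<in> borel_measurable (Zspace k)" for j unfolding F_def using D by auto
  have "emeasure P {Z \<in> space P. Z i \<in> D} = (\<integral>\<^sup>+Z. indicator {Z \<in> space P. Z i \<in> D} Z \<partial>P)"
    using A_sets by simp
  also have "\<dots> = (\<integral>\<^sup>+Z. (\<Prod>j<n. F j (Z j)) \<partial>P)"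
    using i by (intro nn_integral_cong) (simp add: F_def prod.delta indicator_def)
  also have "\<dots> = (\<integral>\<^sup>+\<phi>. emeasure (example_dist (feat i \<phi>)) D \<partial>Phi)"
  proof (subst nn_integral_sample_prod[OF F], intro nn_integral_cong)
    fix \<phi> assume "\<phi> \<in> space Phi"
    then have factor: "(\<integral>\<^sup>+z. F j z \<partial>example_dist (feat j \<phi>))
        = (if j = i then emeasure (example_dist (feat i \<phi>)) D else 1)" if "j < n" for j
      using that D feat_space prob_space.emeasure_space_1[OF prob_space_example_dist] sets_example_dist
      by (auto simp: F_def)
    then show "(\<Prod>j<n. \<integral>\<^sup>+z. F j z \<partial>example_dist (feat j \<phi>)) = emeasure (example_dist (feat i \<phi>)) D"
      using i by (subst prod.cong[OF refl factor]) (simp_all add: prod.delta)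
  qed
  also have "\<dots> = (\<integral>\<^sup>+x. emeasure (example_dist x) D \<partial>Rx)"
    using nn_integral_distr[OF measurable_feat[OF i], of "\<lambda>x. emeasure (example_dist x) D"]
      measurable_comp[OF measurable_prob_algebraD[OF example_dist_measurable]
        measurable_emeasure_subprob_algebra[OF D]] distr_feat[OF i]
    by (simp add: comp_def)
  also have "\<dots> = emeasure J D"
    unfolding J_eq using prob_space.not_empty[OF prob_space_Rx]
    by (intro emeasure_bind[symmetric, OF _ measurable_prob_algebraD[OF example_dist_measurable] D])
  finally show "emeasure P {Z \<in> space P. Z i \<in> D} = emeasure J D" .
qed

lemma emeasure_sample_hits_null:
  assumes D: "D \<in> sets (Zspace k)" and null: "emeasure J D = 0"
  shows "{Z \<in> space P. \<exists>i<n. Z i \<in> D} \<in> sets P" "emeasure P {Z \<in> space P. \<exists>i<n. Z i \<in> D} = 0"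
proof -
  note coordinate = emeasure_sample_coordinate[OF D]
  have eq: "{Z \<in> space P. \<exists>i<n. Z i \<in> D} = (\<Union>i<n. {Z \<in> space P. Z i \<in> D})" by auto
  show "{Z \<in> space P. \<exists>i<n. Z i \<in> D} \<in> sets P" unfolding eq using coordinate(1) by auto
  have "emeasure P (\<Union>i<n. {Z \<in> space P. Z i \<in> D}) \<le> (\<Sum>i<n. emeasure P {Z \<in> space P. Z i \<in> D})"
    using coordinate(1) by (intro emeasure_subadditive_finite) auto
  then show "emeasure P {Z \<in> space P. \<exists>i<n. Z i \<in> D} = 0" unfolding eq using coordinate(2) null by simp
qed

lemma nn_integral_sample_prod_powr_le:
  fixes F :: "(nat \<Rightarrow> 'x) \<times> real \<Rightarrow> real"
  assumes F: "F \<in> borel_measurable (Zspace k)" "\<And>z. a \<le> F z \<and> F z \<le> b" "0 < a"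
    and w: "feasible_weighting k n V E w"
  shows "(\<integral>\<^sup>+Z. (\<Prod>i<n. ennreal (F (Z i) powr w i)) \<partial>P) \<le> ennreal ((\<integral>z. F z \<partial>J) powr (\<Sum>i<n. w i))"
proof -
  \<comment> \<open>Condition on the vertex features: Jensen for each label, then Finner over the features.\<close>
  define G where "G x = (\<integral>z. F z \<partial>example_dist x)" for x
  note w_between = feasible_weighting_between[OF w]
  have F_D: "F \<in> borel_measurable (example_dist x)" if "x \<in> space Rx" for x
    using F(1) measurable_cong_sets[OF sets_example_dist[OF that] refl] by simp
  have G_meas: "G \<in> borel_measurable Rx"
    using measurable_comp[OF measurable_prob_algebraD[OF example_dist_measurable]
        integral_measurable_subprob_algebra[OF F(1)]]
    by (simp add: comp_def G_def[abs_def])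
  have G_bnd: "a \<le> G x \<and> G x \<le> b" if "x \<in> space Rx" for x
    unfolding G_def using prob_space.integral_between[OF prob_space_example_dist[OF that] F_D[OF that]] F(2)
    by blast
  have Jensen: "(\<integral>\<^sup>+z. ennreal (F z powr p) \<partial>example_dist x) \<le> ennreal (G x powr p)"
    if "x \<in> space Rx" "0 \<le> p" "p \<le> 1" for x p
    unfolding G_def using F(2,3) that
    by (intro prob_space.nn_integral_powr_le_powr_integral[OF prob_space_example_dist F_D]) auto
  have "(\<integral>\<^sup>+Z. (\<Prod>i<n. ennreal (F (Z i) powr w i)) \<partial>P)
      = (\<integral>\<^sup>+\<phi>. (\<Prod>i<n. \<integral>\<^sup>+z. ennreal (F z powr w i) \<partial>example_dist (feat i \<phi>)) \<partial>Phi)"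
    using F(1) by (intro nn_integral_sample_prod) measurable
  also have "\<dots> \<le> (\<integral>\<^sup>+\<phi>. ennreal (\<Prod>i<n. G (feat i \<phi>) powr w i) \<partial>Phi)"
    using Jensen feat_space w_between
    by (intro nn_integral_mono) (auto simp: prod_ennreal[symmetric] intro!: prod_mono_ennreal)
  also have "\<dots> = ennreal (\<integral>\<phi>. (\<Prod>i<n. G (feat i \<phi>) powr w i) \<partial>Phi)"
  proof (rule nn_integral_eq_integral)
    show "integrable Phi (\<lambda>\<phi>. \<Prod>i<n. G (feat i \<phi>) powr w i)"
    proof (rule prob_space.integrable_between[OF prob_space_Phi])
      show "(\<lambda>\<phi>. \<Prod>i<n. G (feat i \<phi>) powr w i) \<in> borel_measurable Phi"
        using measurable_comp[OF measurable_feat G_meas] by (auto simp: comp_def intro!: borel_measurable_prod)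
      show "(\<Prod>i<n. a powr w i) \<le> (\<Prod>i<n. G (feat i \<phi>) powr w i)
          \<and> (\<Prod>i<n. G (feat i \<phi>) powr w i) \<le> (\<Prod>i<n. b powr w i)" if "\<phi> \<in> space Phi" for \<phi>
        using G_bnd feat_space that w_between by (intro prod_powr_between[OF _ F(3)]) auto
    qed
  qed (simp add: prod_nonneg)
  also have "\<dots> \<le> ennreal ((\<integral>x. G x \<partial>Rx) powr (\<Sum>i<n. w i))"
    by (intro ennreal_leI integral_feat_prod_powr_le[OF G_meas G_bnd F(3) w])
  also have "(\<integral>x. G x \<partial>Rx) = (\<integral>z. F z \<partial>J)"
    unfolding G_def by (rule integral_J[OF F(1,2), symmetric])
  finally show ?thesis .
qed

lemma weighted_sum_Bernstein:
  fixes Y :: "(nat \<Rightarrow> 'x) \<times> real \<Rightarrow> real"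
  assumes Y: "Y \<in> borel_measurable (Zspace k)" "\<And>z. \<bar>Y z\<bar> \<le> B"
    and mean: "(\<integral>z. Y z \<partial>J) = 0" and var: "(\<integral>z. (Y z)\<^sup>2 \<partial>J) \<le> \<sigma>"
    and l: "0 \<le> l" "l * B < 3"
    and w: "feasible_weighting k n V E w" and s: "s = (\<Sum>i<n. w i)"
  shows "{Z \<in> space P. s * t < (\<Sum>i<n. w i * Y (Z i))} \<in> sets P"
    and "emeasure P {Z \<in> space P. s * t < (\<Sum>i<n. w i * Y (Z i))}
      \<le> ennreal (exp (- (l * s * t) + s * (l\<^sup>2 * \<sigma> / (2 * (1 - l * B / 3)))))"
proof -
  define A where "A = {Z \<in> space P. s * t < (\<Sum>i<n. w i * Y (Z i))}"
  define F where "F z = exp (l * Y z)" for z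
  have "Measurable.pred Zn (\<lambda>Z. s * t < (\<Sum>i<n. w i * Y (Z i)))" using Y(1) by measurable
  then show A_sets: "{Z \<in> space P. s * t < (\<Sum>i<n. w i * Y (Z i))} \<in> sets P"
    unfolding space_P sets_P by simp
  have F_bnd: "exp (- (l * B)) \<le> F z \<and> F z \<le> exp (l * B)" for z
    using mult_bounds_of_abs_le[OF l(1) Y(2)] by (simp add: F_def)
  have Chernoff: "indicator A Z \<le> ennreal (exp (- (l * s * t))) * (\<Prod>i<n. ennreal (F (Z i) powr w i))" for Z
  proof -
    have "ennreal (exp (- (l * s * t))) * (\<Prod>i<n. ennreal (F (Z i) powr w i))
        = ennreal (exp (l * ((\<Sum>i<n. w i * Y (Z i)) - s * t)))"
      by (simp add: F_def powr_def prod_ennreal ennreal_mult[symmetric] exp_sum[symmetric]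
          exp_add[symmetric] sum_distrib_left algebra_simps)
    moreover have "Z \<in> A \<Longrightarrow> 0 \<le> l * ((\<Sum>i<n. w i * Y (Z i)) - s * t)"
      using l(1) by (auto simp: A_def)
    ultimately show ?thesis by (cases "Z \<in> A") auto
  qed
  have "emeasure P A = (\<integral>\<^sup>+Z. indicator A Z \<partial>P)" using A_sets by (simp add: A_def)
  also have "\<dots> \<le> ennreal (exp (- (l * s * t))) * (\<integral>\<^sup>+Z. (\<Prod>i<n. ennreal (F (Z i) powr w i)) \<partial>P)"
    using Chernoff Y(1) by (subst nn_integral_cmult[symmetric])
      (auto simp: measurable_cong_sets[OF sets_P refl] F_def intro!: nn_integral_mono)
  also have "\<dots> \<le> ennreal (exp (- (l * s * t))) * ennreal ((\<integral>z. F z \<partial>J) powr s)"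
    unfolding s using F_bnd Y(1)
    by (intro mult_left_mono nn_integral_sample_prod_powr_le[OF _ _ _ w]) (auto simp: F_def)
  also have "\<dots> \<le> ennreal (exp (- (l * s * t))) * ennreal (exp (l\<^sup>2 * \<sigma> / (2 * (1 - l * B / 3))) powr s)"
  proof (intro mult_left_mono ennreal_leI powr_mono2)
    show "0 \<le> s" unfolding s using feasible_weighting_between(1)[OF w] by (auto intro: sum_nonneg)
    show "0 \<le> (\<integral>z. F z \<partial>J)"
      using F_bnd by (intro integral_nonneg_AE AE_I2) (auto intro: order.trans[OF exp_ge_zero])
    show "(\<integral>z. F z \<partial>J) \<le> exp (l\<^sup>2 * \<sigma> / (2 * (1 - l * B / 3)))"
      unfolding F_def using Y mean var l
      by (intro prob_space.Bernstein_mgf_bound[OF prob_space_J]) (auto simp: measurable_cong_sets[OF sets_J refl])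
  qed simp
  also have "\<dots> = ennreal (exp (- (l * s * t) + s * (l\<^sup>2 * \<sigma> / (2 * (1 - l * B / 3)))))"
    by (simp add: ennreal_mult[symmetric] exp_add[symmetric] powr_def mult_ac)
  finally show "emeasure P A \<le> ennreal (exp (- (l * s * t) + s * (l\<^sup>2 * \<sigma> / (2 * (1 - l * B / 3)))))" .
qed

lemma AE_J_Zset:
  assumes X: "\<And>j. j < k \<Longrightarrow> X j \<in> sets borel" "\<And>j. j < k \<Longrightarrow> emeasure (\<rho> j) (X j) = 1"
  shows "AE z in J. z \<in> Zset k X"
proof -
  have "AE x in Rx. \<forall>j\<in>{..<k}. x j \<in> X j"
  proof (rule AE_finite_allI)
    fix j assume j: "j \<in> {..<k}"
    interpret prob_space "\<rho> j" using prob_space_rho j by auto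
    have X_j: "X j \<in> sets (\<rho> j)" using X(1) sets_rho j by auto
    then have "{y \<in> space (\<rho> j). y \<in> X j} = X j" using sets.sets_into_space by blast
    then have "AE y in \<rho> j. y \<in> X j" using X(2) X_j j by (subst AE_iff_emeasure_eq_1) auto
    then show "AE x in Rx. x j \<in> X j"
      using AE_PiM_component[of "{..<k}" \<rho> j "\<lambda>y. y \<in> X j"] prob_space_rho j by auto
  qed simp
  then have AE_X: "AE x in Rx. x \<in> PiE {..<k} X"
    using AE_space by eventually_elim (auto simp: space_PiM PiE_iff)
  have "AE x in Rx. AE z in example_dist x. z \<in> Zset k X"
    using AE_X AE_space
  proof eventually_elim
    fix x assume x: "x \<in> PiE {..<k} X" "x \<in> space Rx"
    then have "sets (K x) = sets borel"
      using measurable_space[OF K] sets_Rx by (auto simp: space_prob_algebra dest: sets_eq_imp_space_eq)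
    then have "(\<lambda>y. (x, y)) \<in> measurable (K x) (Zspace k)"
      using x(2) sets_eq_imp_space_eq[OF sets_Rx] unfolding Zspace_def
      by (intro measurable_Pair measurable_const measurable_ident_sets) auto
    then show "AE z in example_dist x. z \<in> Zset k X"
      using x(1) Zset_sets[of k X, OF X(1)] by (subst AE_distr_iff) (auto simp: Zset_def)
  qed
  then show ?thesis
    unfolding J_eq using Zset_sets[of k X, OF X(1)]
    by (subst AE_bind[OF measurable_prob_algebraD[OF example_dist_measurable]])
       (auto intro: pred_sets2[OF _ measurable_ident])
qed

end

section \<open>Uniform deviation bound for a function class\<close>

locale networked_function_class = networked_sample k n V E \<rho> K
  for k n :: nat and V :: "nat \<Rightarrow> 'v set" and E :: "nat \<Rightarrow> nat \<Rightarrow> 'v"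
    and \<rho> :: "nat \<Rightarrow> 'x::metric_space measure" and K :: "(nat \<Rightarrow> 'x) \<Rightarrow> real measure" +
  fixes \<G> :: "((nat \<Rightarrow> 'x) \<times> real \<Rightarrow> real) set" and c B :: real
  assumes G_meas: "\<And>g. g \<in> \<G> \<Longrightarrow> g \<in> borel_measurable (Zspace k)"
    and G_pos: "\<And>g. g \<in> \<G> \<Longrightarrow> 0 \<le> expect (joint_dist k \<rho> K) g"
    and G_var: "\<And>g. g \<in> \<G> \<Longrightarrow>
      expect (joint_dist k \<rho> K) (\<lambda>z. (g z)\<^sup>2) \<le> c * expect (joint_dist k \<rho> K) g"
    and G_bd: "\<And>g. g \<in> \<G> \<Longrightarrow>
      AE z in joint_dist k \<rho> K. \<bar>g z - expect (joint_dist k \<rho> K) g\<bar> \<le> B"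
    and c: "0 < c"
begin

abbreviation "\<mu> g \<equiv> expect J g"
abbreviation "clipped_dev h z \<equiv> max (- B) (min B (\<mu> h - h z))"

lemma G_meas_J: "g \<in> \<G> \<Longrightarrow> g \<in> borel_measurable J"
  using G_meas measurable_cong_sets[OF sets_J refl] by blast

lemma integrable_G:
  assumes g: "g \<in> \<G>"
  shows "integrable J g"
proof -
  interpret J: prob_space J by (rule prob_space_J)
  show ?thesis
  proof (rule J.integrable_const_bound[where B="\<bar>\<mu> g\<bar> + B"])
    show "AE z in J. norm (g z) \<le> \<bar>\<mu> g\<bar> + B" using G_bd[OF g] by eventually_elim auto
  qed (rule G_meas_J[OF g])
qed

lemma B_nonneg:
  assumes "g \<in> \<G>"
  shows "0 \<le> B"
proof -
  have "AE z in J. 0 \<le> B" using G_bd[OF assms] by eventually_elim auto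
  then show ?thesis using prob_space.AE_const[OF prob_space_J] by simp
qed

lemma deviation_event_bound:
  assumes h: "h \<in> \<G>" and w: "feasible_weighting k n V E w" and s: "s = (\<Sum>i<n. w i)"
    and \<epsilon>: "0 < \<epsilon>" and \<alpha>: "0 < \<alpha>" "\<alpha> \<le> 1"
  defines "A \<equiv> {Z \<in> space P. s * (\<alpha> * sqrt \<epsilon> * sqrt (\<mu> h + \<epsilon>)) < (\<Sum>i<n. w i * clipped_dev h (Z i))}"
  shows "A \<in> sets P" "emeasure P A \<le> ennreal (exp (- (\<alpha>\<^sup>2 * s * \<epsilon>) / (2 * c + 2 / 3 * B)))"
proof -
  interpret J: prob_space J by (rule prob_space_J)
  define m where "m = \<mu> h + \<epsilon>"
  define t where "t = \<alpha> * sqrt \<epsilon> * sqrt m"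
  define \<sigma> where "\<sigma> = c * m"
  \<comment> \<open>Bernstein's choice of the exponent for deviation \<open>t\<close> and variance bound \<open>\<sigma>\<close>:\<close>
  define l where "l = t / (\<sigma> + B * t / 3)"
  have B: "0 \<le> B" by (rule B_nonneg[OF h])
  have m: "0 < m" "\<epsilon> \<le> m" using G_pos[OF h] \<epsilon> by (auto simp: m_def)
  have t: "0 < t" using \<alpha> \<epsilon> m by (simp add: t_def)
  have "\<alpha> * sqrt \<epsilon> \<le> sqrt \<epsilon>" using \<alpha> \<epsilon> by (intro mult_left_le_one_le) auto
  also have "\<dots> \<le> sqrt m" using m(2) by simp
  finally have t_m: "t \<le> m" using m(1) mult_right_mono[of "\<alpha> * sqrt \<epsilon>" "sqrt m" "sqrt m"] by (simp add: t_def)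
  have t_sq: "t * t = (\<alpha>\<^sup>2 * \<epsilon>) * m" using \<epsilon> m(1) by (simp add: t_def power2_eq_square algebra_simps)
  have s_nonneg: "0 \<le> s" unfolding s using feasible_weighting_between(1)[OF w] by (auto intro: sum_nonneg)
  have \<sigma>_pos: "0 < \<sigma>" using c m by (simp add: \<sigma>_def)
  have D: "0 < \<sigma> + B * t / 3" using \<sigma>_pos B t by (simp add: add_pos_nonneg)
  have "t * B < 3 * (\<sigma> + B * t / 3)" using \<sigma>_pos by simp
  then have l: "0 \<le> l" "l * B < 3"
    using t D by (simp_all add: l_def pos_divide_less_eq mult.commute)
  note moments = J.clipped_deviation_moments[OF G_meas_J[OF h] G_bd[OF h, unfolded expect_def]]
  have Y_meas: "clipped_dev h \<in> borel_measurable (Zspace k)" using G_meas[OF h] by measurable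
  have Y_bd: "\<bar>clipped_dev h z\<bar> \<le> B" for z using B by auto
  have Y_var: "(\<integral>z. (clipped_dev h z)\<^sup>2 \<partial>J) \<le> \<sigma>"
  proof -
    have "0 \<le> c * \<epsilon>" using c \<epsilon> by simp
    then show ?thesis
      using moments(2) G_var[OF h] unfolding expect_def \<sigma>_def m_def distrib_left by linarith
  qed
  have Y_mean: "(\<integral>z. clipped_dev h z \<partial>J) = 0" using moments(1) by (simp add: expect_def)
  note tail = weighted_sum_Bernstein[OF Y_meas Y_bd Y_mean Y_var l w s, of t]
  show "A \<in> sets P" using tail(1) by (simp add: A_def t_def m_def)
  have "emeasure P A \<le> ennreal (exp (- (l * s * t) + s * (l\<^sup>2 * \<sigma> / (2 * (1 - l * B / 3)))))"
    using tail(2) by (simp add: A_def t_def m_def)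
  also have "\<dots> \<le> ennreal (exp (- (\<alpha>\<^sup>2 * \<epsilon> * s) / (2 * c + 2 / 3 * B)))"
    unfolding l_def using Bernstein_exponent_le[OF t t_m t_sq c B s_nonneg \<sigma>_def] by (intro ennreal_leI) simp
  finally show "emeasure P A \<le> ennreal (exp (- (\<alpha>\<^sup>2 * s * \<epsilon>) / (2 * c + 2 / 3 * B)))"
    by (simp add: mult_ac)
qed

lemma deviation_at_cover_center:
  assumes g: "g \<in> \<G>" and h: "h \<in> \<G>" and close: "\<And>z. z \<in> Zset k X \<Longrightarrow> \<bar>g z - h z\<bar> \<le> \<alpha> * \<epsilon>"
    and AE_Zset: "AE z in J. z \<in> Zset k X"
    and Z: "\<And>i. i < n \<Longrightarrow> Z i \<in> Zset k X" "\<And>i. i < n \<Longrightarrow> \<bar>h (Z i) - \<mu> h\<bar> \<le> B"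
    and w: "feasible_weighting k n V E w" and s: "s = (\<Sum>i<n. w i)" "0 < s"
    and \<epsilon>: "0 < \<epsilon>" and \<alpha>: "0 < \<alpha>" "\<alpha> \<le> 1"
    and dev: "4 * \<alpha> * sqrt \<epsilon> < (\<mu> g - weighted_emp_mean n w s g Z) / sqrt (\<mu> g + \<epsilon>)"
  shows "s * (\<alpha> * sqrt \<epsilon> * sqrt (\<mu> h + \<epsilon>)) < (\<Sum>i<n. w i * clipped_dev h (Z i))"
proof -
  interpret J: prob_space J by (rule prob_space_J)
  let ?Eg = "weighted_emp_mean n w s g Z" and ?Eh = "weighted_emp_mean n w s h Z"
  have dE: "\<bar>?Eg - ?Eh\<bar> \<le> \<alpha> * \<epsilon>"
    using feasible_weighting_between(1)[OF w] s close Z(1) by (intro weighted_emp_mean_diff_le) auto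
  have int: "integrable J (\<lambda>z. g z - h z)" using integrable_G[OF g] integrable_G[OF h] by simp
  have AE_close: "AE z in J. \<bar>g z - h z\<bar> \<le> \<alpha> * \<epsilon>" using AE_Zset by eventually_elim (rule close)
  have "(\<integral>z. g z - h z \<partial>J) \<le> \<alpha> * \<epsilon>"
    using AE_close by (intro J.integral_le_const[OF int]) (auto simp: abs_le_iff)
  moreover have "- (\<alpha> * \<epsilon>) \<le> (\<integral>z. g z - h z \<partial>J)"
    using AE_close by (intro J.integral_ge_const[OF int]) (auto simp: abs_le_iff)
  moreover have "\<mu> g - \<mu> h = (\<integral>z. g z - h z \<partial>J)"
    using integrable_G[OF g] integrable_G[OF h] by (simp add: expect_def)
  ultimately have d\<mu>: "\<bar>\<mu> g - \<mu> h\<bar> \<le> \<alpha> * \<epsilon>" by (simp add: abs_le_iff)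
  have "0 < sqrt (\<mu> g + \<epsilon>)" using G_pos[OF g] \<epsilon> by simp
  then have dev': "4 * \<alpha> * sqrt \<epsilon> * sqrt (\<mu> g + \<epsilon>) < \<mu> g - ?Eg"
    using dev by (simp add: pos_less_divide_eq)
  have sEh: "s * ?Eh = (\<Sum>i<n. w i * h (Z i))" using s(2) by (simp add: weighted_emp_mean_def)
  from relative_deviation_transfer[OF \<alpha> \<epsilon> G_pos[OF g] G_pos[OF h] d\<mu> dE dev']
  have "s * (\<alpha> * sqrt \<epsilon> * sqrt (\<mu> h + \<epsilon>)) < s * (\<mu> h - ?Eh)" using s(2) by simp
  also have "s * (\<mu> h - ?Eh) = (\<Sum>i<n. w i * \<mu> h) - (\<Sum>i<n. w i * h (Z i))"
    using sEh by (simp add: right_diff_distrib s(1) sum_distrib_right)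
  also have "\<dots> = (\<Sum>i<n. w i * (\<mu> h - h (Z i)))" by (simp add: right_diff_distrib sum_subtractf)
  also have "\<dots> = (\<Sum>i<n. w i * clipped_dev h (Z i))"
  proof (rule sum.cong[OF refl])
    fix i assume "i \<in> {..<n}"
    then have "clipped_dev h (Z i) = \<mu> h - h (Z i)" using Z(2)[of i] by (auto simp: abs_le_iff)
    then show "w i * (\<mu> h - h (Z i)) = w i * clipped_dev h (Z i)" by simp
  qed
  finally show ?thesis .
qed

lemma bad_examples_null:
  assumes C: "finite C" "C \<subseteq> \<G>"
    and X: "\<And>j. j < k \<Longrightarrow> X j \<in> sets borel" "\<And>j. j < k \<Longrightarrow> emeasure (\<rho> j) (X j) = 1"
  defines "D \<equiv> (space (Zspace k) - Zset k X) \<union> (\<Union>h\<in>C. {z \<in> space (Zspace k). B < \<bar>h z - \<mu> h\<bar>})"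
  shows "D \<in> sets (Zspace k)" "emeasure J D = 0"
proof -
  have "{z \<in> space (Zspace k). B < \<bar>h z - \<mu> h\<bar>} \<in> sets (Zspace k)" if "h \<in> C" for h
  proof -
    have "h \<in> \<G>" using C that by auto
    note G_meas[OF this, measurable]
    show ?thesis by measurable
  qed
  then show D_sets: "D \<in> sets (Zspace k)" unfolding D_def using Zset_sets[of k X, OF X(1)] C by auto
  have "AE z in J. \<forall>h\<in>C. \<bar>h z - \<mu> h\<bar> \<le> B"
    using G_bd C by (intro AE_finite_allI) auto
  moreover have "AE z in J. z \<in> Zset k X" by (rule AE_J_Zset) (use X in auto)
  ultimately have "AE z in J. z \<notin> D" by eventually_elim (auto simp: D_def not_less)
  moreover have "{z \<in> space J. \<not> z \<notin> D} = D" using sets.sets_into_space[OF D_sets] space_J by auto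
  ultimately show "emeasure J D = 0" using AE_iff_measurable[of D J "\<lambda>z. z \<notin> D"] D_sets sets_J by simp
qed

lemma uniform_deviation_bound_of_cover:
  assumes C: "is_cover (Zset k X) \<G> (\<alpha> * \<epsilon>) C"
    and X: "\<And>j. j < k \<Longrightarrow> X j \<in> sets borel" "\<And>j. j < k \<Longrightarrow> emeasure (\<rho> j) (X j) = 1"
    and w: "feasible_weighting k n V E w" and s: "s = (\<Sum>i<n. w i)" "0 < s"
    and \<epsilon>: "0 < \<epsilon>" and \<alpha>: "0 < \<alpha>" "\<alpha> \<le> 1"
  shows "\<exists>A \<in> sets P.
      {Z \<in> space P. \<exists>g\<in>\<G>. (\<mu> g - weighted_emp_mean n w s g Z) / sqrt (\<mu> g + \<epsilon>) > 4 * \<alpha> * sqrt \<epsilon>} \<subseteq> A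
      \<and> emeasure P A \<le> ennreal (real (card C)) * ennreal (exp (- (\<alpha>\<^sup>2 * s * \<epsilon>) / (2 * c + 2 / 3 * B)))"
proof -
  let ?b = "exp (- (\<alpha>\<^sup>2 * s * \<epsilon>) / (2 * c + 2 / 3 * B))"
  have C_fin: "finite C" and C_G: "C \<subseteq> \<G>"
    and cover: "\<And>g. g \<in> \<G> \<Longrightarrow> \<exists>h\<in>C. \<forall>z\<in>Zset k X. \<bar>g z - h z\<bar> \<le> \<alpha> * \<epsilon>"
    using C by (auto simp: is_cover_def)
  define Bh where "Bh h = {Z \<in> space P. s * (\<alpha> * sqrt \<epsilon> * sqrt (\<mu> h + \<epsilon>)) < (\<Sum>i<n. w i * clipped_dev h (Z i))}" for h
  define D where "D = (space (Zspace k) - Zset k X) \<union> (\<Union>h\<in>C. {z \<in> space (Zspace k). B < \<bar>h z - \<mu> h\<bar>})"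
  have D: "D \<in> sets (Zspace k)" "emeasure J D = 0"
    using bad_examples_null[OF C_fin C_G X] by (simp_all add: D_def)
  let ?Nb = "{Z \<in> space P. \<exists>i<n. Z i \<in> D}"
  note Nb = emeasure_sample_hits_null[OF D]
  have Bh: "Bh h \<in> sets P" "emeasure P (Bh h) \<le> ennreal ?b" if "h \<in> C" for h
    using deviation_event_bound[OF _ w s(1) \<epsilon> \<alpha>] that C_G by (auto simp: Bh_def)
  have AE_Zset: "AE z in J. z \<in> Zset k X" by (rule AE_J_Zset) (use X in auto)
  have incl: "{Z \<in> space P. \<exists>g\<in>\<G>. (\<mu> g - weighted_emp_mean n w s g Z) / sqrt (\<mu> g + \<epsilon>) > 4 * \<alpha> * sqrt \<epsilon>}
      \<subseteq> (\<Union>h\<in>C. Bh h) \<union> ?Nb"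
  proof
    fix Z assume "Z \<in> {Z \<in> space P. \<exists>g\<in>\<G>. (\<mu> g - weighted_emp_mean n w s g Z) / sqrt (\<mu> g + \<epsilon>) > 4 * \<alpha> * sqrt \<epsilon>}"
    then obtain g where Z: "Z \<in> space P" and g: "g \<in> \<G>"
      and dev: "4 * \<alpha> * sqrt \<epsilon> < (\<mu> g - weighted_emp_mean n w s g Z) / sqrt (\<mu> g + \<epsilon>)" by blast
    obtain h where h: "h \<in> C" "\<forall>z\<in>Zset k X. \<bar>g z - h z\<bar> \<le> \<alpha> * \<epsilon>" using cover[OF g] by blast
    show "Z \<in> (\<Union>h\<in>C. Bh h) \<union> ?Nb"
    proof (cases "Z \<in> ?Nb")
      case False
      have "Z i \<in> space (Zspace k)" "Z i \<notin> D" if "i < n" for i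
        using Z False that by (auto simp: space_P space_PiM PiE_iff)
      then have "Z i \<in> Zset k X" "\<bar>h (Z i) - \<mu> h\<bar> \<le> B" if "i < n" for i
        using that h(1) by (auto simp: D_def not_less)
      then have "Z \<in> Bh h"
        using deviation_at_cover_center[OF g _ _ AE_Zset _ _ w s \<epsilon> \<alpha> dev] h C_G Z
        by (auto simp: Bh_def)
      then show ?thesis using h(1) by blast
    qed simp
  qed
  have UB: "(\<Union>h\<in>C. Bh h) \<in> sets P" using Bh(1) C_fin by auto
  have "emeasure P ((\<Union>h\<in>C. Bh h) \<union> ?Nb) \<le> emeasure P (\<Union>h\<in>C. Bh h) + emeasure P ?Nb"
    by (rule emeasure_subadditive[OF UB Nb(1)])
  also have "\<dots> = emeasure P (\<Union>h\<in>C. Bh h)" using Nb(2) by simp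
  also have "\<dots> \<le> (\<Sum>h\<in>C. emeasure P (Bh h))"
    using Bh(1) C_fin by (intro emeasure_subadditive_finite) auto
  also have "\<dots> \<le> (\<Sum>h\<in>C. ennreal ?b)" using Bh(2) by (rule sum_mono)
  also have "\<dots> = ennreal (real (card C)) * ennreal ?b" by (simp add: ennreal_of_nat_eq_real_of_nat)
  finally show ?thesis using incl UB Nb(1) by blast
qed

lemma uniform_deviation_bound:
  assumes X: "\<And>j. j < k \<Longrightarrow> X j \<in> sets borel" "\<And>j. j < k \<Longrightarrow> emeasure (\<rho> j) (X j) = 1"
    and w: "feasible_weighting k n V E w" and s: "s = (\<Sum>i<n. w i)"
    and \<epsilon>: "0 < \<epsilon>" and \<alpha>: "0 < \<alpha>" "\<alpha> \<le> 1"
  shows "\<exists>A \<in> sets P.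
      {Z \<in> space P. \<exists>g\<in>\<G>. (\<mu> g - weighted_emp_mean n w s g Z) / sqrt (\<mu> g + \<epsilon>) > 4 * \<alpha> * sqrt \<epsilon>} \<subseteq> A
      \<and> emeasure P A \<le> covering_number (Zset k X) \<G> (\<alpha> * \<epsilon>)
          * ennreal (exp (- (\<alpha>\<^sup>2 * s * \<epsilon>) / (2 * c + 2 / 3 * B)))"
proof (cases "\<G> = {}")
  case False
  let ?N = "covering_number (Zset k X) \<G> (\<alpha> * \<epsilon>)"
  let ?b = "exp (- (\<alpha>\<^sup>2 * s * \<epsilon>) / (2 * c + 2 / 3 * B))"
  have N: "1 \<le> ?N" using False by (rule one_le_covering_number)
  have "0 \<le> s" unfolding s using feasible_weighting_between(1)[OF w] by (auto intro: sum_nonneg)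
  show ?thesis
  proof (cases "?N = \<top> \<or> s = 0")
    case True
    \<comment> \<open>Then the bound is at least 1, and the whole sample space does.\<close>
    have "1 \<le> ?N * ennreal ?b"
    proof (cases "?N = \<top>")
      case False
      with True have "s = 0" by blast
      with N show ?thesis by simp
    qed (simp add: ennreal_top_mult)
    then have "emeasure P (space P) \<le> ?N * ennreal ?b"
      using prob_space.emeasure_space_1[OF prob_space_P] by simp
    then show ?thesis by blast
  next
    case False
    then obtain C where C: "is_cover (Zset k X) \<G> (\<alpha> * \<epsilon>) C" and card_C: "ennreal (real (card C)) \<le> ?N"
      using obtain_minimal_cover by blast
    have "0 < s" using False \<open>0 \<le> s\<close> by simp
    with uniform_deviation_bound_of_cover[OF C X w s _ \<epsilon> \<alpha>] obtain A where A: "A \<in> sets P"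
      "{Z \<in> space P. \<exists>g\<in>\<G>. (\<mu> g - weighted_emp_mean n w s g Z) / sqrt (\<mu> g + \<epsilon>) > 4 * \<alpha> * sqrt \<epsilon>} \<subseteq> A"
      "emeasure P A \<le> ennreal (real (card C)) * ennreal ?b"
      by blast
    have "emeasure P A \<le> ?N * ennreal ?b"
      using A(3) mult_right_mono[OF card_C] by (rule order.trans) simp
    with A(1,2) show ?thesis by blast
  qed
qed (intro bexI[of _ "{}"], auto)

end

theorem lemma7:
  fixes k n :: nat
    and V :: "nat \<Rightarrow> 'v set" and E :: "nat \<Rightarrow> nat \<Rightarrow> 'v"
    and X :: "nat \<Rightarrow> 'x::metric_space set"
    and \<rho> :: "nat \<Rightarrow> 'x measure"
    and K :: "(nat \<Rightarrow> 'x) \<Rightarrow> real measure"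
    and w :: "nat \<Rightarrow> real" and s c B \<epsilon> \<alpha> :: real
    and \<G> :: "((nat \<Rightarrow> 'x) \<times> real \<Rightarrow> real) set"
  assumes G: "kpartite_hypergraph k n V E"
    and X: "\<And>j. j < k \<Longrightarrow> compact (X j)"
    and rho: "\<And>j. j < k \<Longrightarrow> prob_space (\<rho> j)"
    and rho_sets: "\<And>j. j < k \<Longrightarrow> sets (\<rho> j) = sets borel"
    and rho_X: "\<And>j. j < k \<Longrightarrow> emeasure (\<rho> j) (X j) = 1"
    and K: "K \<in> measurable (PiM {..<k} (\<lambda>_. borel)) (prob_algebra borel)"
    and w: "optimal_weighting k n V E w"
    and s: "s = frac_matching_number k n V E"
    and c: "c > 0"
    and G_meas: "\<And>g. g \<in> \<G> \<Longrightarrow> g \<in> borel_measurable (Zspace k)"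
    and G_pos: "\<And>g. g \<in> \<G> \<Longrightarrow> expect (joint_dist k \<rho> K) g \<ge> 0"
    and G_var: "\<And>g. g \<in> \<G> \<Longrightarrow>
        expect (joint_dist k \<rho> K) (\<lambda>z. (g z)\<^sup>2) \<le> c * expect (joint_dist k \<rho> K) g"
    and G_bd: "\<And>g. g \<in> \<G> \<Longrightarrow>
        AE z in joint_dist k \<rho> K. \<bar>g z - expect (joint_dist k \<rho> K) g\<bar> \<le> B"
    and eps: "\<epsilon> > 0"
    and alpha: "0 < \<alpha>" "\<alpha> \<le> 1"
  shows "\<exists>A \<in> sets (networked_sample_dist k n V E \<rho> K).
     {Z \<in> space (networked_sample_dist k n V E \<rho> K).
        \<exists>g\<in>\<G>. (expect (joint_dist k \<rho> K) g - weighted_emp_mean n w s g Z)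
                 / sqrt (expect (joint_dist k \<rho> K) g + \<epsilon>) > 4 * \<alpha> * sqrt \<epsilon>} \<subseteq> A
     \<and> emeasure (networked_sample_dist k n V E \<rho> K) A
         \<le> covering_number (Zset k X) \<G> (\<alpha> * \<epsilon>)
            * ennreal (exp (- (\<alpha>\<^sup>2 * s * \<epsilon>) / (2 * c + 2 / 3 * B)))"
proof -
  interpret networked_function_class k n V E \<rho> K \<G> c B
    by (intro networked_function_class.intro networked_sample.intro networked_function_class_axioms.intro)
       (fact G rho rho_sets K G_meas G_pos G_var G_bd c)+
  have feasible: "feasible_weighting k n V E w" and s_sum: "s = (\<Sum>i<n. w i)"
    using w s by (simp_all add: optimal_weighting_def)
  have X_sets: "X j \<in> sets borel" if "j < k" for j
    using X[OF that] by (auto intro: borel_closed compact_imp_closed)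
  show ?thesis by (rule uniform_deviation_bound[OF X_sets rho_X feasible s_sum eps alpha])
qed

end
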